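(* Let $d,m$ be positive integers. (1) The elements $L^{(=)}_a=((0,1,\dots,d-1),(\lambda(a,1),\lambda(a,0),\dots,\lambda(a,0)))$, for $a\in(\mathbb{Z}/m\mathbb{Z})^{\ast}$ with $a^d\equiv1\pmod{\operatorname{rad}'(m)}$, form a complete system of representatives of the conjugacy classes of $W_=(d,m)$ consisting of $(dm)$-cycles. (2) Fix a set $R$ containing exactly one element of each conjugacy class of involutions of $\operatorname{Hol}(\mathbb{Z}/m\mathbb{Z})$. The elements $$\big((0,1)(2,3)\cdots(2k-2,2k-1),\ (\lambda(a,0),\dots,\lambda(a,0),\lambda(a,b_{2k}),\dots,\lambda(a,b_{d-1}))\big),$$ where $k\in\{0,\dots,\lfloor d/2\rfloor\}$, $a\in(\mathbb{Z}/m\mathbb{Z})^{\ast}$ with $a^2=1$, and $(\lambda(a,b_{2k}),\dots,\lambda(a,b_{d-1}))$ ranges over lexicographically ordered $(d-2k)$-tuples of elements of $R$ with first parameter $a$, form a complete system of representatives of the conjugacy classes of involutions of $W_=(d,m)$.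
   Context: $\operatorname{Hol}(\mathbb{Z}/m\mathbb{Z})$ consists of permutations $\lambda(a,b):x\mapsto ax+b$ of $\mathbb{Z}/m\mathbb{Z}$ ($a$ a unit). $W(d,m)=\operatorname{Hol}(\mathbb{Z}/m\mathbb{Z})\wr_{\mathrm{imp}}\operatorname{Sym}(d)$ is the permutation group on $\mathbb{Z}/m\mathbb{Z}\times\{0,\dots,d-1\}$ of pairs $(\sigma,(g_0,\dots,g_{d-1}))$ acting by $(x,i)\mapsto(g_{\sigma(i)}(x),\sigma(i))$; $W_=(d,m)$ is its subgroup of elements $(\psi,(\lambda(a,b_0),\dots,\lambda(a,b_{d-1})))$ with a common $a$. Conjugacy is taken within $W_=(d,m)$. An involution is an element whose square is the identity (identity included). $\operatorname{rad}'(m)=\operatorname{rad}(m)$ if $4\nmid m$ and $2\operatorname{rad}(m)$ if $4\mid m$. With each $\lambda(a,b)$ written with $a,b\in\{0,\dots,m-1\}$, a tuple is lexicographically ordered if the pairs $(a_i,b_i)$ are nondecreasing in lexicographic order. *)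

theory Defs
  imports "HOL-Computational_Algebra.Primes" "HOL-Number_Theory.Cong" "HOL-Combinatorics.Permutations"
begin

(* Z/mZ is represented by {0..<m} (naturals), with arithmetic mod m.
   The point set Z/mZ x {0,...,d-1} is {0..<m} x {0..<d}. *)

definition pts :: "nat \<Rightarrow> nat \<Rightarrow> (nat \<times> nat) set" where
  "pts d m = {0..<m} \<times> {0..<d}"

definition lam :: "nat \<Rightarrow> nat \<Rightarrow> nat \<Rightarrow> nat \<Rightarrow> nat" where
  "lam m a b x = (a * x + b) mod m"

definition is_unit_mod :: "nat \<Rightarrow> nat \<Rightarrow> bool" where
  "is_unit_mod m a \<longleftrightarrow> a < m \<and> coprime a m"

definition rad :: "nat \<Rightarrow> nat" where
  "rad m = \<Prod>(prime_factors m)"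

definition rad' :: "nat \<Rightarrow> nat" where
  "rad' m = (if 4 dvd m then 2 * rad m else rad m)"

(* The permutation of the point set given by (sigma, (lambda(a,b_0),...,lambda(a,b_{d-1}))):
   (x,i) |-> (lambda(a,b_{sigma i})(x), sigma i); extended by the identity outside the point set. *)
definition welem :: "nat \<Rightarrow> nat \<Rightarrow> (nat \<Rightarrow> nat) \<Rightarrow> nat \<Rightarrow> (nat \<Rightarrow> nat)
                      \<Rightarrow> (nat \<times> nat \<Rightarrow> nat \<times> nat)" where
  "welem d m \<sigma> a bs = (\<lambda>(x, i). if (x, i) \<in> pts d m then (lam m a (bs (\<sigma> i)) x, \<sigma> i) else (x, i))"

definition Weq :: "nat \<Rightarrow> nat \<Rightarrow> (nat \<times> nat \<Rightarrow> nat \<times> nat) set" where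
  "Weq d m = {f. \<exists>\<sigma> a bs. \<sigma> permutes {0..<d} \<and> is_unit_mod m a \<and> (\<forall>i<d. bs i < m)
                        \<and> f = welem d m \<sigma> a bs}"

definition conj_in :: "('a \<Rightarrow> 'a) set \<Rightarrow> ('a \<Rightarrow> 'a) \<Rightarrow> ('a \<Rightarrow> 'a) \<Rightarrow> bool" where
  "conj_in G f g \<longleftrightarrow> (\<exists>w\<in>G. g \<circ> w = w \<circ> f)"

(* f is an involution: its square is the identity (identity included) *)
definition involution :: "('a \<Rightarrow> 'a) \<Rightarrow> bool" where
  "involution f \<longleftrightarrow> f \<circ> f = id"

(* f is an n-cycle on the point set S where n = card S: a single orbit covering S *)
definition full_cycle_on :: "'a set \<Rightarrow> ('a \<Rightarrow> 'a) \<Rightarrow> bool" where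
  "full_cycle_on S f \<longleftrightarrow> (\<forall>p\<in>S. {(f ^^ n) p | n. True} = S)"

(* Hol(Z/mZ): elements lambda(a,b), written as pairs (a,b) with a,b in {0..m-1} *)
definition hol :: "nat \<Rightarrow> (nat \<times> nat) set" where
  "hol m = {(a, b). is_unit_mod m a \<and> b < m}"

definition hol_involution :: "nat \<Rightarrow> nat \<times> nat \<Rightarrow> bool" where
  "hol_involution m h \<longleftrightarrow> h \<in> hol m \<and>
     (\<forall>x<m. lam m (fst h) (snd h) (lam m (fst h) (snd h) x) = x)"

definition hol_conj :: "nat \<Rightarrow> nat \<times> nat \<Rightarrow> nat \<times> nat \<Rightarrow> bool" where
  "hol_conj m h h' \<longleftrightarrow> (\<exists>(c, e)\<in>hol m. \<forall>x<m.
     lam m c e (lam m (fst h) (snd h) x) = lam m (fst h') (snd h') (lam m c e x))"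

definition lex_le :: "nat \<times> nat \<Rightarrow> nat \<times> nat \<Rightarrow> bool" where
  "lex_le p q \<longleftrightarrow> fst p < fst q \<or> (fst p = fst q \<and> snd p \<le> snd q)"

definition Lrep :: "nat \<Rightarrow> nat \<Rightarrow> nat \<Rightarrow> (nat \<times> nat \<Rightarrow> nat \<times> nat)" where
  "Lrep d m a = welem d m (\<lambda>i. (i + 1) mod d) a (\<lambda>i. if i = 0 then 1 mod m else 0)"

definition pairswap :: "nat \<Rightarrow> nat \<Rightarrow> nat" where
  "pairswap k i = (if i < 2 * k then (if even i then i + 1 else i - 1) else i)"

(* ((0,1)...(2k-2,2k-1), (lambda(a,0),...,lambda(a,0),lambda(a,b_{2k}),...,lambda(a,b_{d-1}))),
   where t = [(a,b_{2k}),...,(a,b_{d-1})] *)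
definition Irep :: "nat \<Rightarrow> nat \<Rightarrow> nat \<Rightarrow> nat \<Rightarrow> (nat \<times> nat) list \<Rightarrow> (nat \<times> nat \<Rightarrow> nat \<times> nat)" where
  "Irep d m k a t = welem d m (pairswap k) a (\<lambda>i. if i < 2 * k then 0 else snd (t ! (i - 2 * k)))"

definition Iidx :: "nat \<Rightarrow> nat \<Rightarrow> (nat \<times> nat) set \<Rightarrow> (nat \<times> nat \<times> (nat \<times> nat) list) set" where
  "Iidx d m R = {(k, a, t). k \<le> d div 2 \<and> is_unit_mod m a \<and> [a ^ 2 = 1] (mod m)
      \<and> length t = d - 2 * k \<and> set t \<subseteq> R \<and> (\<forall>h\<in>set t. fst h = a) \<and> sorted_wrt lex_le t}"

end

theory Submission
  imports Defs "HOL-Library.Product_Lexorder" "HOL-Combinatorics.Cycles"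
begin

text \<open>
  Write an element of \<open>W\<^sub>=(d,m)\<close> as \<open>(\<sigma>, (\<lambda>(a, b\<^sub>j))\<^sub>j)\<close>; conjugation preserves the
  common multiplier \<open>a\<close>.

  If \<open>g\<close> is a \<open>(dm)\<close>-cycle, then \<open>\<sigma>\<close> is a \<open>d\<close>-cycle and \<open>g\<^sup>d\<close> acts on the fibre over \<open>0\<close> as the
  affine map \<open>x \<mapsto> a\<^sup>d x + C\<close>, which must be transitive on \<open>\<int>/m\<int>\<close>. By the Hull--Dobell theorem
  this happens iff \<open>C\<close> is a unit and \<open>a\<^sup>d \<equiv> 1 (mod rad'(m))\<close>; the theorem itself rests on
  \<open>m | 1 + A + \<dots> + A\<^bsup>n - 1\<^esup> \<longleftrightarrow> m | n\<close> for \<open>A \<equiv> 1 (mod rad'(m))\<close>, proved one prime power at a time.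
  Numbering the fibres along the cycle of \<open>\<sigma>\<close> and scaling by \<open>C\<close> then conjugates \<open>g\<close> to \<open>L\<^sub>a\<close>.

  If \<open>g\<close> is an involution, \<open>\<sigma>\<close> is a product of disjoint transpositions. Numbering the fibres so
  that \<open>\<sigma>\<close> becomes \<open>(0,1)(2,3)\<dots>\<close> and translating away the constants on the swapped fibres
  leaves, over each fixed point, an involution of \<open>Hol(\<int>/m\<int>)\<close> with multiplier \<open>a\<close>; a translation
  alone conjugates it to its representative in \<open>R\<close>, and sorting these gives the normal form. It is
  unique because a conjugating element permutes the fixed fibres and conjugates their fibre maps.
\<close>

section \<open>Geometric sums modulo prime powers\<close>

definition geom_sum :: "nat \<Rightarrow> nat \<Rightarrow> nat" where
  "geom_sum A n = (\<Sum>j<n. A ^ j)"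

lemma geom_sum_0 [simp]: "geom_sum A 0 = 0"
  by (simp add: geom_sum_def)

lemma geom_sum_Suc: "geom_sum A (Suc n) = geom_sum A n + A ^ n"
  by (simp add: geom_sum_def)

lemma geom_sum_Suc_left: "geom_sum A (Suc n) = 1 + A * geom_sum A n"
  unfolding geom_sum_def by (subst sum.lessThan_Suc_shift) (simp add: sum_distrib_left)

lemma geom_sum_add: "geom_sum A (k + n) = geom_sum A k + A ^ k * geom_sum A n"
  by (induction n) (simp_all add: geom_sum_Suc algebra_simps power_add)

lemma geom_sum_mult: "geom_sum A (n * k) = geom_sum A n * geom_sum (A ^ n) k"
proof (induction k)
  case (Suc k)
  have "geom_sum A (n * Suc k) = geom_sum A (n * k) + A ^ (n * k) * geom_sum A n"
    by (simp only: mult_Suc_right add.commute[of n] geom_sum_add)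
  also have "\<dots> = geom_sum A n * geom_sum (A ^ n) k + (A ^ n) ^ k * geom_sum A n"
    using Suc by (simp add: power_mult)
  also have "\<dots> = geom_sum A n * geom_sum (A ^ n) (Suc k)"
    by (simp add: geom_sum_Suc distrib_left mult.commute)
  finally show ?case .
qed simp

lemma geom_sum_pos: "n > 0 \<Longrightarrow> geom_sum A n > 0"
  by (cases n) (simp_all add: geom_sum_Suc_left)

lemma geom_sum_cong_length:
  assumes "[A = 1] (mod q)"
  shows "[geom_sum A n = n] (mod q)"
proof (induction n)
  case (Suc n)
  have "[A ^ n = 1] (mod q)" using cong_pow[OF assms, of n] by simp
  with Suc have "[geom_sum A n + A ^ n = n + 1] (mod q)"
    by (intro cong_add) auto
  then show ?case by (simp add: geom_sum_Suc)
qed simp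

lemma one_plus_power_cong:
  fixes t :: int
  shows "[(1 + t) ^ j = 1 + int j * t] (mod t\<^sup>2)"
proof (induction j)
  case (Suc j)
  have "[(1 + t) ^ Suc j = (1 + t) * (1 + int j * t)] (mod t\<^sup>2)"
    using Suc by (simp add: cong_mult)
  also have "(1 + t) * (1 + int j * t) = (1 + int (Suc j) * t) + t\<^sup>2 * int j"
    by (simp add: algebra_simps power2_eq_square)
  also have "[\<dots> = 1 + int (Suc j) * t] (mod t\<^sup>2)"
    by (simp add: cong_iff_dvd_diff)
  finally show ?case .
qed simp

lemma geom_sum_odd_prime_cong:
  assumes p: "prime p" "p \<noteq> 2" and C: "[C = 1] (mod p)"
  shows "[int (geom_sum C p) = int p] (mod (int p)\<^sup>2)"
proof -
  define t where "t = int C - 1"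
  have "int p dvd t"
    using C unfolding t_def by (simp add: cong_iff_dvd_diff flip: cong_int_iff)
  then obtain s where s: "t = int p * s" by blast
  obtain q where q: "p = 2 * q + 1"
    using p prime_odd_nat[of p] prime_ge_2_nat[of p] by (metis oddE le_neq_implies_less)
  \<comment> \<open>modulo \<open>t\<^sup>2\<close> the sum is \<open>p + t p (p - 1) / 2\<close>, and \<open>p\<^sup>2\<close> divides \<open>t p (p - 1) / 2\<close> since \<open>p\<close> is odd\<close>
  have "[int (geom_sum C p) = (\<Sum>j<p. 1 + int j * t)] (mod t\<^sup>2)"
    unfolding geom_sum_def t_def by simp (intro cong_sum one_plus_power_cong[of "int C - 1", simplified])
  then have "[int (geom_sum C p) = (\<Sum>j<p. 1 + int j * t)] (mod (int p)\<^sup>2)"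
    by (rule cong_dvd_modulus) (simp add: s power_mult_distrib)
  moreover have "2 * (\<Sum>j<p. int j) = int p * (int p - 1)"
    by (induction p) (simp_all add: algebra_simps)
  then have "(\<Sum>j<p. int j) = int p * int q"
    using q by simp
  then have "(\<Sum>j<p. 1 + int j * t) = int p + (int p)\<^sup>2 * (int q * s)"
    by (simp add: sum.distrib flip: sum_distrib_right) (simp add: s power2_eq_square)
  then have "[(\<Sum>j<p. 1 + int j * t) = int p] (mod (int p)\<^sup>2)"
    by (simp add: cong_iff_dvd_diff)
  ultimately show ?thesis
    by (rule cong_trans)
qed

lemma geom_sum_prime_exact:
  assumes p: "prime p" and C: "[C = 1] (mod p)" and C4: "p = 2 \<Longrightarrow> [C = 1] (mod 4)"
  obtains u where "geom_sum C p = p * u" and "\<not> p dvd u"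
proof (cases "p = 2")
  case True
  then have "C mod 4 = 1" using C4 by (simp add: cong_def)
  then obtain q where "C = 4 * q + 1" by (metis div_mod_decomp mult.commute)
  then have "geom_sum C p = 2 * (2 * q + 1)"
    using True by (simp add: geom_sum_def numeral_2_eq_2)
  then show ?thesis using True that[of "2 * q + 1"] by simp
next
  case False
  have c: "[int (geom_sum C p) = int p] (mod (int p)\<^sup>2)"
    by (rule geom_sum_odd_prime_cong[OF p False C])
  then have "[int (geom_sum C p) = int p] (mod int p)"
    by (rule cong_dvd_modulus) simp
  then have "int p dvd int (geom_sum C p)"
    using cong_dvd_iff by fastforce
  then obtain u where u: "geom_sum C p = p * u"
    by (auto simp only: int_dvd_int_iff elim!: dvdE)
  have "(int p)\<^sup>2 dvd int p * (int u - 1)"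
    using c u by (simp add: cong_iff_dvd_diff algebra_simps)
  then have "int p dvd int u - 1"
    using p by (simp add: power2_eq_square prime_gt_0_nat)
  have "\<not> p dvd u"
  proof
    assume "p dvd u"
    then have "int p dvd int u - (int u - 1)"
      using \<open>int p dvd int u - 1\<close> dvd_diff by (metis int_dvd_int_iff)
    then show False using p by simp
  qed
  then show ?thesis using u that by blast
qed

lemma prime_power_dvd_geom_sum_iff:
  assumes p: "prime p" and A: "[A = 1] (mod p)" and A4: "p = 2 \<Longrightarrow> [A = 1] (mod 4)"
  shows "p ^ k dvd geom_sum A n \<longleftrightarrow> p ^ k dvd n"
proof (induction n arbitrary: k rule: less_induct)
  case (less n)
  show ?case
  proof (cases k)
    case (Suc k')
    have p1: "p > 1" using p prime_gt_1_nat by blast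
    show ?thesis
    proof (cases "p dvd n \<and> n > 0")
      case False
      have "p dvd geom_sum A n \<longleftrightarrow> p dvd n"
        by (rule cong_dvd_iff[OF geom_sum_cong_length[OF A]])
      then show ?thesis using False Suc by (auto intro: dvd_trans[of p "p ^ k"])
    next
      case True
      then obtain n' where n': "n = n' * p" and "n' < n"
        using p1 by (auto elim!: dvdE)
      \<comment> \<open>\<open>geom_sum A (n' p)\<close> is \<open>geom_sum A n'\<close> times a number of \<open>p\<close>-adic valuation one\<close>
      obtain u where u: "geom_sum (A ^ n') p = p * u" and pu: "\<not> p dvd u"
        using geom_sum_prime_exact[OF p] cong_pow[OF A, of n'] cong_pow[OF A4, of n'] by auto
      have cop: "coprime (p ^ k') u"
        using pu p by (simp add: prime_imp_coprime coprime_commute)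
      have "p ^ k dvd geom_sum A n \<longleftrightarrow> p ^ k' * p dvd geom_sum A n' * u * p"
        using Suc n' u by (simp add: geom_sum_mult ac_simps)
      also have "\<dots> \<longleftrightarrow> p ^ k' dvd geom_sum A n'"
        using p1 cop by (simp add: coprime_dvd_mult_left_iff)
      also have "\<dots> \<longleftrightarrow> p ^ k dvd n"
        using less.IH[OF \<open>n' < n\<close>] Suc n' p1 by (simp add: mult.commute)
      finally show ?thesis .
    qed
  qed simp
qed

section \<open>The modified radical\<close>

lemma not_coprime_prime_factor:
  fixes a b :: nat
  assumes "\<not> coprime a b"
  obtains p where "prime p" "p dvd a" "p dvd b"
proof -
  have "gcd a b \<noteq> 1" using assms by (simp add: coprime_iff_gcd_eq_1)
  then obtain p where "prime p" "p dvd gcd a b" using prime_factor_nat by blast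
  then show ?thesis using that by simp
qed

lemma prime_dvd_rad:
  assumes "m > 0" "prime p" "p dvd m"
  shows "p dvd rad m"
  using assms unfolding rad_def by (intro dvd_prodI) (auto simp: in_prime_factors_iff)

lemma prime_dvd_rad':
  assumes "m > 0" "prime p" "p dvd m"
  shows "p dvd rad' m"
  using prime_dvd_rad[OF assms] unfolding rad'_def by auto

lemma four_dvd_rad':
  assumes "m > 0" "4 dvd m"
  shows "4 dvd rad' m"
proof -
  have "2 dvd rad m"
    using assms by (intro prime_dvd_rad) (auto intro: dvd_trans[of 2 4])
  then show ?thesis using assms unfolding rad'_def by auto
qed

lemma prod_primes_dvd:
  fixes X :: nat
  assumes "finite P" "\<And>p. p \<in> P \<Longrightarrow> prime p" "\<And>p. p \<in> P \<Longrightarrow> p dvd X"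
  shows "\<Prod>P dvd X"
  using assms
proof (induction P rule: finite_induct)
  case (insert p F)
  have "coprime p (\<Prod>F)"
    using insert by (intro prod_coprime_right primes_coprime) auto
  with insert show ?case by (simp add: divides_mult)
qed simp

lemma rad'_dvd:
  fixes X :: nat
  assumes m: "m > 0" and P: "\<And>p. prime p \<Longrightarrow> p dvd m \<Longrightarrow> p dvd X"
    and F: "4 dvd m \<Longrightarrow> 4 dvd X"
  shows "rad' m dvd X"
proof (cases "4 dvd m")
  case False
  then show ?thesis
    using m P unfolding rad'_def rad_def by (auto intro: prod_primes_dvd simp: in_prime_factors_iff)
next
  case True
  let ?P = "prime_factors m - {2}"
  have "2 \<in> prime_factors m"
    using m True by (auto simp: in_prime_factors_iff intro: dvd_trans[of 2 4])
  then have r: "rad' m = 4 * \<Prod>?P"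
    using True unfolding rad'_def rad_def by (simp add: prod.remove)
  have "\<Prod>?P dvd X"
    using m P by (intro prod_primes_dvd) (auto simp: in_prime_factors_iff)
  moreover have "coprime 4 (\<Prod>?P)"
  proof (rule prod_coprime_right)
    fix q assume "q \<in> ?P"
    then have "coprime 2 q"
      using primes_coprime[of 2 q] by (auto simp: in_prime_factors_iff)
    then show "coprime 4 q"
      using coprime_power_left_iff[of 2 2 q] by simp
  qed
  ultimately show ?thesis
    using F True r by (simp add: divides_mult)
qed

lemma prime_powers_dvd_imp_dvd:
  fixes m X :: nat
  assumes "m > 0" "X > 0" "\<And>p k. prime p \<Longrightarrow> p ^ k dvd m \<Longrightarrow> p ^ k dvd X"
  shows "m dvd X"
proof (rule multiplicity_le_imp_dvd)
  fix p :: nat assume p: "prime p"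
  have "p ^ multiplicity p m dvd X" using assms(3)[OF p multiplicity_dvd] .
  then show "multiplicity p m \<le> multiplicity p X"
    using assms p by (intro multiplicity_geI) (auto simp: prime_gt_1_nat)
qed (use assms in simp)

lemma dvd_geom_sum_iff:
  assumes m: "m > 0" and A: "[A = 1] (mod rad' m)"
  shows "m dvd geom_sum A n \<longleftrightarrow> m dvd n"
proof (cases "n = 0")
  case False
  have key: "p ^ k dvd geom_sum A n \<longleftrightarrow> p ^ k dvd n" if p: "prime p" and pk: "p ^ k dvd m" for p k
  proof (cases k)
    case (Suc k')
    then have "p dvd m" using pk by (simp add: dvd_trans[of p "p ^ k"])
    then have Ap: "[A = 1] (mod p)"
      using A prime_dvd_rad'[OF m p] cong_dvd_modulus_nat by blast
    show ?thesis
    proof (cases "k' = 0")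
      case True
      then show ?thesis
        using Suc cong_dvd_iff[OF geom_sum_cong_length[OF Ap]] by simp
    next
      case False
      have "[A = 1] (mod 4)" if "p = 2"
      proof -
        have "4 dvd p ^ k" using that Suc False le_imp_power_dvd[of 2 k 2] by simp
        then have "4 dvd rad' m"
          using four_dvd_rad'[OF m] pk dvd_trans by blast
        then show ?thesis
          using A cong_dvd_modulus_nat by blast
      qed
      then show ?thesis by (rule prime_power_dvd_geom_sum_iff[OF p Ap])
    qed
  qed simp
  show ?thesis
  proof
    assume md: "m dvd geom_sum A n"
    show "m dvd n"
    proof (rule prime_powers_dvd_imp_dvd)
      fix p k :: nat assume "prime p" "p ^ k dvd m"
      then show "p ^ k dvd n" using md key dvd_trans by blast
    qed (use False m in auto)
  next
    assume md: "m dvd n"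
    show "m dvd geom_sum A n"
    proof (rule prime_powers_dvd_imp_dvd)
      fix p k :: nat assume "prime p" "p ^ k dvd m"
      then show "p ^ k dvd geom_sum A n" using md key dvd_trans by blast
    qed (use False m geom_sum_pos[of n A] in auto)
  qed
qed simp

section \<open>The Hull--Dobell theorem\<close>

definition lam_transitive :: "nat \<Rightarrow> nat \<Rightarrow> nat \<Rightarrow> bool" where
  "lam_transitive m A B \<longleftrightarrow> (\<forall>x<m. \<forall>z<m. \<exists>n. (lam m A B ^^ n) x = z)"

lemma mod_affine_eq: "(a * (x mod m) + b) mod m = (a * x + b) mod (m::nat)"
  by (metis mod_add_left_eq mod_mult_right_eq)

lemma cong_linear_coeff:
  fixes a b K K' m :: nat
  assumes m: "m > 1" and H: "\<And>x. x < m \<Longrightarrow> [a * x + K = b * x + K'] (mod m)"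
  shows "[a = b] (mod m)"
proof -
  have "[K = K'] (mod m)" using H[of 0] m by simp
  then have "[a + K' = a + K] (mod m)" using cong_add[OF cong_refl[of a] cong_sym] by blast
  also have "[a + K = b + K'] (mod m)" using H[of 1] m by simp
  finally show ?thesis by (simp add: cong_add_rcancel_nat)
qed

lemma funpow_lam_lt: "x < m \<Longrightarrow> (lam m A B ^^ k) x < m"
  by (cases k) (auto simp: lam_def)

lemma funpow_lam: "x < m \<Longrightarrow> (lam m A B ^^ n) x = (A ^ n * x + B * geom_sum A n) mod m"
proof (induction n)
  case (Suc n)
  have "(lam m A B ^^ Suc n) x = lam m A B ((A ^ n * x + B * geom_sum A n) mod m)"
    using Suc by simp
  also have "\<dots> = (A * (A ^ n * x + B * geom_sum A n) + B) mod m"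
    unfolding lam_def by (rule mod_affine_eq)
  also have "\<dots> = (A ^ Suc n * x + B * geom_sum A (Suc n)) mod m"
    by (simp add: geom_sum_Suc_left algebra_simps)
  finally show ?case .
qed simp

lemma lam_cong: "q dvd m \<Longrightarrow> [lam m A B y = A * y + B] (mod q)"
  unfolding lam_def by (rule cong_dvd_modulus_nat[of _ _ m]) (simp_all add: cong_def)

lemma lam_comp: "lam m c e (lam m a b x) = (c * a * x + (c * b + e)) mod m"
proof -
  have "lam m c e (lam m a b x) = (c * (a * x + b) + e) mod m"
    unfolding lam_def by (rule mod_affine_eq)
  then show ?thesis by (simp add: algebra_simps)
qed

lemma lam_surj:
  assumes "coprime a m" and "y < m"
  obtains z where "z < m" "lam m a b z = y"
proof -
  have "inj_on (lam m a b) {..<m}"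
  proof (rule inj_onI)
    fix z z' assume "z \<in> {..<m}" "z' \<in> {..<m}" "lam m a b z = lam m a b z'"
    then have "[a * z = a * z'] (mod m)" and "z < m" "z' < m"
      by (simp_all add: lam_def cong_add_rcancel_nat flip: cong_def)
    then show "z = z'"
      using assms(1) by (simp add: cong_mult_lcancel_nat cong_less_modulus_unique_nat)
  qed
  moreover have "lam m a b ` {..<m} \<subseteq> {..<m}"
    using assms(2) by (auto simp: lam_def)
  ultimately have "lam m a b ` {..<m} = {..<m}"
    by (simp add: card_image card_subset_eq)
  then have "y \<in> lam m a b ` {..<m}"
    using assms(2) by simp
  then show ?thesis using that by auto
qed

lemma coprime_if_cong_rad':
  assumes m: "m > 0" and A: "[A = 1] (mod rad' m)"
  shows "coprime A m"
proof (rule ccontr)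
  assume "\<not> coprime A m"
  then obtain p where p: "prime p" "p dvd A" "p dvd m"
    by (rule not_coprime_prime_factor)
  then have "[A = 1] (mod p)"
    using A prime_dvd_rad'[OF m] cong_dvd_modulus_nat by blast
  then have "p dvd 1"
    using cong_dvd_iff p(2) by blast
  with p(1) show False by simp
qed

lemma lam_transitiveI:
  assumes m: "m > 0" and A: "[A = 1] (mod rad' m)" and B: "coprime B m"
  shows "lam_transitive m A B"
  unfolding lam_transitive_def
proof (intro allI impI)
  fix x z assume x: "x < m" and z: "z < m"
  let ?f = "lam m A B"
  have f0: "(?f ^^ n) 0 = (B * geom_sum A n) mod m" for n
    using funpow_lam[where x = 0] m by simp
  \<comment> \<open>the orbit of \<open>0\<close> has period exactly \<open>m\<close>, hence it is all of \<open>{..<m}\<close>\<close>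
  have "inj_on (\<lambda>i. (?f ^^ i) 0) {..<m}"
  proof (rule linorder_inj_onI', rule notI)
    fix i j assume j: "j \<in> {..<m}" and ij: "i < j" and eq: "(?f ^^ i) 0 = (?f ^^ j) 0"
    have "[B * geom_sum A i + 0 = B * geom_sum A i + B * A ^ i * geom_sum A (j - i)] (mod m)"
      using eq ij f0[of i] f0[of j] geom_sum_add[of A i "j - i"]
      by (simp add: cong_def algebra_simps)
    then have "[0 = B * A ^ i * geom_sum A (j - i)] (mod m)"
      by (simp only: cong_add_lcancel_nat)
    then have "[B * A ^ i * geom_sum A (j - i) = 0] (mod m)"
      by (rule cong_sym)
    then have "m dvd B * A ^ i * geom_sum A (j - i)"
      by (simp only: cong_0_iff)
    moreover have "coprime m (B * A ^ i)"
      using B coprime_if_cong_rad'[OF m A] by (simp add: coprime_commute)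
    ultimately have "m dvd j - i"
      using dvd_geom_sum_iff[OF m A] by (simp add: coprime_dvd_mult_right_iff)
    with ij j show False by (simp add: nat_dvd_not_less)
  qed
  moreover have "(\<lambda>i. (?f ^^ i) 0) ` {..<m} \<subseteq> {..<m}"
    using m by (auto simp: f0)
  ultimately have orbit: "(\<lambda>i. (?f ^^ i) 0) ` {..<m} = {..<m}"
    by (simp add: card_image card_subset_eq)
  have "x \<in> (\<lambda>i. (?f ^^ i) 0) ` {..<m}" "z \<in> (\<lambda>i. (?f ^^ i) 0) ` {..<m}"
    using orbit x z by simp_all
  then obtain i0 i where i0: "(?f ^^ i0) 0 = x" "i0 < m" and i: "(?f ^^ i) 0 = z"
    by auto
  have fm: "(?f ^^ m) 0 = 0"
    using dvd_geom_sum_iff[OF m A, of m] by (simp add: f0)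
  have "(?f ^^ (i + m - i0)) x = (?f ^^ (i + m - i0 + i0)) 0"
    by (simp add: funpow_add i0(1)[symmetric])
  also have "\<dots> = z"
    using i0(2) by (simp add: funpow_add i fm)
  finally show "\<exists>n. (?f ^^ n) x = z" by blast
qed

lemma lam_transitive_coprime:
  assumes m: "m > 0" and T: "lam_transitive m A B"
  shows "coprime B m"
proof (rule ccontr)
  assume "\<not> coprime B m"
  then obtain p where p: "prime p" "p dvd B" "p dvd m"
    by (rule not_coprime_prime_factor)
  have "p dvd (lam m A B ^^ n) 0" for n
  proof (induction n)
    case (Suc n)
    then show ?case
      using cong_dvd_iff[OF lam_cong[OF p(3)]] p(2) by simp
  qed simp
  moreover have "p \<le> m"
    using p m dvd_imp_le by blast
  then have "m > 1"
    using prime_gt_1_nat[OF p(1)] by linarith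
  then obtain n where "(lam m A B ^^ n) 0 = 1"
    using T unfolding lam_transitive_def by auto
  ultimately show False using p(1) by (metis not_prime_unit)
qed

lemma affine_fixpoint_mod_prime:
  fixes p A B :: nat
  assumes p: "prime p" and A: "\<not> [A = 1] (mod p)"
  obtains y where "y < p" "[A * y + B = y] (mod p)"
proof -
  have "coprime (int A - 1) (int p)"
    using A p by (simp add: prime_imp_coprime coprime_commute cong_iff_dvd_diff flip: cong_int_iff)
  then obtain u where u: "[(int A - 1) * u = 1] (mod int p)"
    using cong_solve_coprime_int by blast
  define y where "y = nat ((- int B * u) mod int p)"
  have "int y = (- int B * u) mod int p"
    using p unfolding y_def by (simp add: prime_gt_0_nat)
  then have "[int y = - int B * u] (mod int p)"
    by (simp add: cong_def)
  then have "[(int A - 1) * int y = - int B * ((int A - 1) * u)] (mod int p)"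
    by (metis cong_scalar_left mult.left_commute)
  also have "[- int B * ((int A - 1) * u) = - int B * 1] (mod int p)"
    by (intro cong_mult cong_refl u)
  finally have "[int (A * y + B) = int y] (mod int p)"
    by (simp add: cong_iff_dvd_diff algebra_simps)
  then have "[A * y + B = y] (mod p)"
    by (simp only: cong_int_iff)
  moreover have "y < p"
    using p unfolding y_def by (simp add: prime_gt_0_nat nat_less_iff)
  ultimately show ?thesis using that by blast
qed

lemma lam_transitive_cong_prime:
  assumes m: "m > 0" and T: "lam_transitive m A B" and p: "prime p" "p dvd m"
  shows "[A = 1] (mod p)"
proof (rule ccontr)
  assume "\<not> [A = 1] (mod p)"
  then obtain y where y: "y < p" "[A * y + B = y] (mod p)"
    using affine_fixpoint_mod_prime[OF p(1)] by blast
  \<comment> \<open>a fixed point modulo \<open>p\<close> makes the residue class of \<open>y\<close> modulo \<open>p\<close> invariant\<close>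
  have inv: "[(lam m A B ^^ n) y = y] (mod p)" for n
  proof (induction n)
    case (Suc n)
    have "[lam m A B ((lam m A B ^^ n) y) = A * (lam m A B ^^ n) y + B] (mod p)"
      by (rule lam_cong[OF p(2)])
    also have "[A * (lam m A B ^^ n) y + B = A * y + B] (mod p)"
      by (intro cong_add cong_mult cong_refl Suc)
    also note y(2)
    finally show ?case by simp
  qed simp
  have "p \<le> m" using p m by (simp add: dvd_imp_le)
  obtain n where "(lam m A B ^^ n) y = (y + 1) mod p"
    using T y(1) \<open>p \<le> m\<close> p(1) unfolding lam_transitive_def
    by (meson mod_less_divisor order_less_le_trans prime_gt_0_nat)
  then have "[y + 1 = y + 0] (mod p)"
    using inv[of n] by (simp add: cong_def)
  then have "[1 = 0] (mod p)"
    by (simp only: cong_add_lcancel_nat)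
  then show False using p(1) by (simp add: cong_def)
qed

lemma lam_transitive_cong_four:
  assumes m: "m > 0" and T: "lam_transitive m A B" and m4: "4 dvd m"
  shows "[A = 1] (mod 4)"
proof (rule ccontr)
  assume nc: "\<not> [A = 1] (mod 4)"
  let ?f = "lam m A B"
  have "[A = 1] (mod 2)"
    using lam_transitive_cong_prime[OF m T, of 2] m4 by (simp add: dvd_trans[of 2 4])
  with nc have A3: "[A = 3] (mod 4)"
    by (simp add: cong_def) presburger
  \<comment> \<open>\<open>A \<equiv> -1 (mod 4)\<close> makes \<open>f \<circ> f\<close> the identity modulo \<open>4\<close>\<close>
  have step2: "[?f (?f y) = y] (mod 4)" for y
  proof -
    have "[?f (?f y) = A * ?f y + B] (mod 4)" by (rule lam_cong[OF m4])
    also have "[A * ?f y + B = A * (A * y + B) + B] (mod 4)"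
      by (intro cong_add cong_mult cong_refl lam_cong[OF m4])
    also have "[A * (A * y + B) + B = 3 * (3 * y + B) + B] (mod 4)"
      by (intro cong_add cong_mult cong_refl A3)
    also have "3 * (3 * y + B) + B = y + 4 * (2 * y + B)" by (simp add: algebra_simps)
    also have "[y + 4 * (2 * y + B) = y] (mod 4)" unfolding cong_def by (rule mod_mult_self2)
    finally show ?thesis .
  qed
  have par: "[(?f ^^ (2 * j)) 0 = 0] (mod 4) \<and> [(?f ^^ (2 * j + 1)) 0 = ?f 0] (mod 4)" for j
  proof (induction j)
    case (Suc j)
    have "(?f ^^ (2 * Suc j)) 0 = ?f (?f ((?f ^^ (2 * j)) 0))"
      and "(?f ^^ (2 * Suc j + 1)) 0 = ?f (?f ((?f ^^ (2 * j + 1)) 0))"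
      by simp_all
    then show ?case using Suc step2 cong_trans by metis
  qed simp
  define z where "z = (if ?f 0 mod 4 = 1 then 2 else 1::nat)"
  have "4 \<le> m" using m m4 by (simp add: dvd_imp_le)
  then have "z < m" by (simp add: z_def)
  then obtain n where n: "(?f ^^ n) 0 = z"
    using T m unfolding lam_transitive_def by blast
  have "z mod 4 = 0 \<or> z mod 4 = ?f 0 mod 4"
    using par[of "n div 2"] n by (cases "even n") (auto simp: cong_def elim!: evenE oddE)
  then show False by (auto simp: z_def split: if_splits)
qed

theorem hull_dobell:
  assumes m: "m > 0"
  shows "lam_transitive m A B \<longleftrightarrow> coprime B m \<and> [A = 1] (mod rad' m)"
proof
  assume T: "lam_transitive m A B"
  show "coprime B m \<and> [A = 1] (mod rad' m)"
  proof (cases "m = 1")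
    case True
    then show ?thesis by (simp add: rad'_def rad_def)
  next
    case False
    then obtain p where p: "prime p" "p dvd m"
      using prime_factor_nat by blast
    have "A \<noteq> 0"
    proof
      assume "A = 0"
      then have "[1 = 0] (mod p)"
        using lam_transitive_cong_prime[OF m T p] cong_sym by simp
      then show False using p(1) by (simp add: cong_0_iff)
    qed
    then have "rad' m dvd A - 1"
      using lam_transitive_cong_prime[OF m T] lam_transitive_cong_four[OF m T]
      by (intro rad'_dvd[OF m]) (auto simp: cong_altdef_nat)
    with \<open>A \<noteq> 0\<close> show ?thesis
      using lam_transitive_coprime[OF m T] by (simp add: cong_altdef_nat)
  qed
qed (use lam_transitiveI[OF m] in blast)

section \<open>The group \<open>W\<^sub>=(d,m)\<close>\<close>

lemma pts_iff [simp]: "(x, i) \<in> pts d m \<longleftrightarrow> x < m \<and> i < d"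
  by (simp add: pts_def)

lemma permutes_lessThan_lt:
  fixes \<sigma> :: "nat \<Rightarrow> nat"
  assumes "\<sigma> permutes {0..<d}" and "i < d"
  shows "\<sigma> i < d"
proof -
  have "\<sigma> i \<in> {0..<d}"
    by (rule permutes_in_image[OF assms(1), THEN iffD2]) (use assms(2) in simp)
  then show ?thesis by simp
qed

lemma funpow_permutes_lessThan_lt:
  fixes \<sigma> :: "nat \<Rightarrow> nat"
  shows "\<sigma> permutes {0..<d} \<Longrightarrow> i < d \<Longrightarrow> (\<sigma> ^^ n) i < d"
  by (induction n) (auto simp: permutes_lessThan_lt)

lemma welem_apply: "x < m \<Longrightarrow> i < d \<Longrightarrow> welem d m \<sigma> a bs (x, i) = ((a * x + bs (\<sigma> i)) mod m, \<sigma> i)"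
  by (simp add: welem_def lam_def)

lemma welem_outside: "p \<notin> pts d m \<Longrightarrow> welem d m \<sigma> a bs p = p"
  by (cases p) (auto simp: welem_def)

lemma welem_cong:
  assumes "\<And>i. i < d \<Longrightarrow> \<sigma> i = \<sigma>' i" "\<And>i. i < d \<Longrightarrow> bs (\<sigma> i) = bs' (\<sigma>' i)"
  shows "welem d m \<sigma> a bs = welem d m \<sigma>' a bs'"
  using assms by (auto simp: welem_def fun_eq_iff)

lemma welem_in_pts: "\<sigma> permutes {0..<d} \<Longrightarrow> p \<in> pts d m \<Longrightarrow> welem d m \<sigma> a bs p \<in> pts d m"
  by (cases p) (auto simp: welem_apply permutes_lessThan_lt)

lemma funpow_welem_in_pts:
  "\<sigma> permutes {0..<d} \<Longrightarrow> p \<in> pts d m \<Longrightarrow> (welem d m \<sigma> a bs ^^ n) p \<in> pts d m"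
  by (induction n) (auto intro: welem_in_pts)

lemma WeqI:
  "\<sigma> permutes {0..<d} \<Longrightarrow> is_unit_mod m a \<Longrightarrow> (\<And>i. i < d \<Longrightarrow> bs i < m) \<Longrightarrow> welem d m \<sigma> a bs \<in> Weq d m"
  unfolding Weq_def by blast

lemma WeqE:
  assumes "g \<in> Weq d m"
  obtains \<sigma> a bs where "\<sigma> permutes {0..<d}" "is_unit_mod m a" "\<And>i. i < d \<Longrightarrow> bs i < m"
    "g = welem d m \<sigma> a bs"
  using assms unfolding Weq_def by blast

lemma is_unit_mod_pos: "is_unit_mod m a \<Longrightarrow> m > 0"
  by (simp add: is_unit_mod_def)

lemma is_unit_mod_one: "m > 0 \<Longrightarrow> is_unit_mod m (1 mod m)"
  by (cases "m = 1") (auto simp: is_unit_mod_def)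

fun welem_shift :: "(nat \<Rightarrow> nat) \<Rightarrow> nat \<Rightarrow> (nat \<Rightarrow> nat) \<Rightarrow> nat \<Rightarrow> nat \<Rightarrow> nat" where
  "welem_shift \<sigma> a bs 0 i = 0"
| "welem_shift \<sigma> a bs (Suc n) i = a * welem_shift \<sigma> a bs n i + bs ((\<sigma> ^^ Suc n) i)"

lemma funpow_welem:
  assumes s: "\<sigma> permutes {0..<d}" and x: "x < m" and i: "i < d"
  shows "(welem d m \<sigma> a bs ^^ n) (x, i) = ((a ^ n * x + welem_shift \<sigma> a bs n i) mod m, (\<sigma> ^^ n) i)"
proof (induction n)
  case (Suc n)
  have "(welem d m \<sigma> a bs ^^ Suc n) (x, i) =
        welem d m \<sigma> a bs ((a ^ n * x + welem_shift \<sigma> a bs n i) mod m, (\<sigma> ^^ n) i)"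
    using Suc by simp
  also have "\<dots> = ((a * (a ^ n * x + welem_shift \<sigma> a bs n i) + bs ((\<sigma> ^^ Suc n) i)) mod m, (\<sigma> ^^ Suc n) i)"
    using x funpow_permutes_lessThan_lt[OF s i] by (simp add: welem_apply mod_affine_eq)
  finally show ?case by (simp add: algebra_simps)
qed (use x in simp)

lemma welem_comp_apply:
  assumes s: "\<sigma> permutes {0..<d}" and x: "x < m" and j: "j < d"
  shows "(welem d m \<sigma>' a' bs' \<circ> welem d m \<sigma> a bs) (x, j)
    = ((a' * a * x + (a' * bs (\<sigma> j) + bs' (\<sigma>' (\<sigma> j)))) mod m, \<sigma>' (\<sigma> j))"
proof -
  have "(welem d m \<sigma>' a' bs' \<circ> welem d m \<sigma> a bs) (x, j)
      = ((a' * ((a * x + bs (\<sigma> j)) mod m) + bs' (\<sigma>' (\<sigma> j))) mod m, \<sigma>' (\<sigma> j))"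
    using x j permutes_lessThan_lt[OF s j] by (simp add: welem_apply)
  also have "(a' * ((a * x + bs (\<sigma> j)) mod m) + bs' (\<sigma>' (\<sigma> j))) mod m
      = (a' * (a * x + bs (\<sigma> j)) + bs' (\<sigma>' (\<sigma> j))) mod m"
    by (rule mod_affine_eq)
  also have "\<dots> = (a' * a * x + (a' * bs (\<sigma> j) + bs' (\<sigma>' (\<sigma> j)))) mod m"
    by (simp add: algebra_simps)
  finally show ?thesis .
qed

lemma welem_intertwineI:
  assumes s: "\<sigma> permutes {0..<d}" and t: "\<tau> permutes {0..<d}"
    and perm: "\<And>j. j < d \<Longrightarrow> \<sigma>' (\<tau> j) = \<tau> (\<sigma> j)"
    and shift: "\<And>j. j < d \<Longrightarrow> [c * bs (\<sigma> j) + es (\<tau> (\<sigma> j)) = a * es (\<tau> j) + bs' (\<sigma>' (\<tau> j))] (mod m)"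
  shows "welem d m \<sigma>' a bs' \<circ> welem d m \<tau> c es = welem d m \<tau> c es \<circ> welem d m \<sigma> a bs"
proof
  fix p
  show "(welem d m \<sigma>' a bs' \<circ> welem d m \<tau> c es) p = (welem d m \<tau> c es \<circ> welem d m \<sigma> a bs) p"
  proof (cases "p \<in> pts d m")
    case True
    then obtain x j where p: "p = (x, j)" "x < m" "j < d" by (cases p) auto
    have "[a * c * x + (a * es (\<tau> j) + bs' (\<sigma>' (\<tau> j))) = c * a * x + (c * bs (\<sigma> j) + es (\<tau> (\<sigma> j)))] (mod m)"
      using shift[OF p(3)] by (simp add: cong_add cong_sym mult.commute)
    then show ?thesis
      using welem_comp_apply[OF t p(2,3), of \<sigma>' a bs' c es]
        welem_comp_apply[OF s p(2,3), of \<tau> c es a bs] perm[OF p(3)]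
      by (simp add: p(1) cong_def)
  qed (simp add: welem_outside)
qed

lemma welem_intertwineD:
  assumes eq: "welem d m \<sigma>' a' bs' \<circ> welem d m \<tau> c es = welem d m \<tau> c es \<circ> welem d m \<sigma> a bs"
    and s: "\<sigma> permutes {0..<d}" and t: "\<tau> permutes {0..<d}" and x: "x < m" and j: "j < d"
  shows "\<sigma>' (\<tau> j) = \<tau> (\<sigma> j)"
    and "[a' * c * x + (a' * es (\<tau> j) + bs' (\<sigma>' (\<tau> j))) = c * a * x + (c * bs (\<sigma> j) + es (\<tau> (\<sigma> j)))] (mod m)"
proof -
  have "((a' * c * x + (a' * es (\<tau> j) + bs' (\<sigma>' (\<tau> j)))) mod m, \<sigma>' (\<tau> j))
      = ((c * a * x + (c * bs (\<sigma> j) + es (\<tau> (\<sigma> j)))) mod m, \<tau> (\<sigma> j))"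
    by (simp only: eq welem_comp_apply[OF t x j, symmetric] welem_comp_apply[OF s x j, symmetric])
  then show "\<sigma>' (\<tau> j) = \<tau> (\<sigma> j)"
    and "[a' * c * x + (a' * es (\<tau> j) + bs' (\<sigma>' (\<tau> j))) = c * a * x + (c * bs (\<sigma> j) + es (\<tau> (\<sigma> j)))] (mod m)"
    unfolding cong_def prod.inject by blast+
qed

lemma unit_mod_inverse:
  assumes c: "is_unit_mod m c"
  obtains c' where "is_unit_mod m c'" "[c' * c = 1] (mod m)"
proof -
  have m: "m > 0" using c by (simp add: is_unit_mod_def)
  obtain v where "[c * v = Suc 0] (mod m)"
    using c cong_solve_coprime_nat[of c m] by (auto simp: is_unit_mod_def)
  moreover have "(v mod m * c) mod m = (c * v) mod m"
    by (metis mod_mult_right_eq mult.commute)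
  ultimately have v: "[v mod m * c = 1] (mod m)"
    by (simp add: cong_def)
  then have "coprime (v mod m) m"
    using cong_imp_coprime[OF cong_sym[OF v]] by simp
  then have "is_unit_mod m (v mod m)"
    using m by (simp add: is_unit_mod_def)
  with v show ?thesis using that by blast
qed

lemma welem_left_inverse:
  assumes t: "\<tau> permutes {0..<d}" and cc: "[c' * c = 1] (mod m)" and es: "\<And>i. i < d \<Longrightarrow> es i < m"
  shows "welem d m (inv \<tau>) c' (\<lambda>j. (c' * (m - es (\<tau> j))) mod m) \<circ> welem d m \<tau> c es = id"
    (is "welem d m _ _ ?es' \<circ> _ = id")
proof
  fix p show "(welem d m (inv \<tau>) c' ?es' \<circ> welem d m \<tau> c es) p = id p"
  proof (cases "p \<in> pts d m")
    case True
    then obtain x j where p: "p = (x, j)" "x < m" "j < d" by (cases p) auto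
    let ?e = "es (\<tau> j)"
    have e: "?e < m" using es[OF permutes_lessThan_lt[OF t p(3)]] .
    \<comment> \<open>the inverse of \<open>x \<mapsto> c x + e\<close> is \<open>x \<mapsto> c' x + c' (m - e)\<close>\<close>
    have "[c' * c * x + (c' * ?e + (c' * (m - ?e)) mod m) = 1 * x + c' * (?e + (m - ?e))] (mod m)"
      by (intro cong_add cong_mult cc cong_refl) (simp add: cong_def mod_add_right_eq distrib_left)
    also have "1 * x + c' * (?e + (m - ?e)) = x + c' * m"
      using e by simp
    finally have "(c' * c * x + (c' * ?e + ?es' (inv \<tau> (\<tau> j)))) mod m = x"
      using p(2) permutes_inverses(2)[OF t] by (simp add: cong_def)
    then show ?thesis
      using p welem_comp_apply[OF t p(2,3)] permutes_inverses(2)[OF t] by simp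
  qed (simp add: welem_outside)
qed

lemma Weq_inverse:
  assumes w: "w \<in> Weq d m"
  obtains w' where "w' \<in> Weq d m" "w' \<circ> w = id" "w \<circ> w' = id"
proof -
  obtain \<tau> c es where t: "\<tau> permutes {0..<d}" and c: "is_unit_mod m c"
    and es: "\<And>i. i < d \<Longrightarrow> es i < m" and w_eq: "w = welem d m \<tau> c es"
    using WeqE[OF w] by blast
  have m: "m > 0" using c by (rule is_unit_mod_pos)
  obtain c' where c': "is_unit_mod m c'" and cc: "[c' * c = 1] (mod m)"
    using unit_mod_inverse[OF c] by blast
  define es' where "es' = (\<lambda>j. (c' * (m - es (\<tau> j))) mod m)"
  define w' where "w' = welem d m (inv \<tau>) c' es'"
  have ti: "inv \<tau> permutes {0..<d}" using t by (rule permutes_inv)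
  have w': "w' \<in> Weq d m" unfolding w'_def
    by (rule WeqI[OF ti c']) (simp add: es'_def m)
  have left: "w' \<circ> w = id"
    using welem_left_inverse[OF t cc es] by (simp add: w_eq w'_def es'_def)
  \<comment> \<open>\<open>w'\<close> has a left inverse \<open>w''\<close> as well, which must then be \<open>w\<close>\<close>
  define w'' where "w'' = welem d m (inv (inv \<tau>)) c (\<lambda>j. (c * (m - es' (inv \<tau> j))) mod m)"
  have "w'' \<circ> w' = id"
    unfolding w''_def w'_def
    by (rule welem_left_inverse[OF ti]) (use cc m in \<open>simp_all add: es'_def mult.commute\<close>)
  have "w'' = w'' \<circ> (w' \<circ> w)"
    by (simp add: left)
  also have "\<dots> = w"
    by (simp add: comp_assoc[symmetric] \<open>w'' \<circ> w' = id\<close>)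
  finally have "w \<circ> w' = id"
    using \<open>w'' \<circ> w' = id\<close> by simp
  with w' left show ?thesis using that by blast
qed

lemma conj_in_Weq_sym:
  assumes "conj_in (Weq d m) f g"
  shows "conj_in (Weq d m) g f"
proof -
  obtain w where w: "w \<in> Weq d m" and eq: "g \<circ> w = w \<circ> f"
    using assms unfolding conj_in_def by blast
  obtain w' where w': "w' \<in> Weq d m" "w' \<circ> w = id" "w \<circ> w' = id"
    using Weq_inverse[OF w] by blast
  have "f \<circ> w' = w' \<circ> w \<circ> f \<circ> w'" using w'(2) by (simp add: comp_assoc)
  also have "\<dots> = w' \<circ> g \<circ> w \<circ> w'" using eq by (simp add: comp_assoc)
  also have "\<dots> = w' \<circ> g" using w'(3) by (simp add: comp_assoc)
  finally show ?thesis unfolding conj_in_def using w'(1) by blast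
qed

lemma conj_in_Weq_multiplier:
  assumes d: "d > 0" and s: "\<sigma> permutes {0..<d}" and a: "is_unit_mod m a" and a': "is_unit_mod m a'"
    and conj: "conj_in (Weq d m) (welem d m \<sigma> a bs) (welem d m \<sigma>' a' bs')"
  shows "a = a'"
proof (cases "m = 1")
  case False
  then have m: "m > 1" using is_unit_mod_pos[OF a] by simp
  obtain w where w: "w \<in> Weq d m" and eq: "welem d m \<sigma>' a' bs' \<circ> w = w \<circ> welem d m \<sigma> a bs"
    using conj unfolding conj_in_def by blast
  obtain \<tau> c es where t: "\<tau> permutes {0..<d}" and c: "is_unit_mod m c" and wd: "w = welem d m \<tau> c es"
    using WeqE[OF w] by blast
  have "[a' * c = c * a] (mod m)"
    using m welem_intertwineD(2)[OF eq[unfolded wd] s t _ d] by (rule cong_linear_coeff)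
  then have "[c * a' = c * a] (mod m)"
    by (simp add: mult.commute)
  then have "[a' = a] (mod m)"
    using c by (simp add: is_unit_mod_def cong_mult_lcancel_nat)
  then show ?thesis
    using a a' by (simp add: cong_def is_unit_mod_def)
qed (use a a' in \<open>simp add: is_unit_mod_def\<close>)

section \<open>Conjugacy classes of \<open>(dm)\<close>-cycles\<close>

definition rot :: "nat \<Rightarrow> nat \<Rightarrow> nat" where
  "rot d i = (if i < d then (i + 1) mod d else i)"

definition delta0 :: "nat \<Rightarrow> nat \<Rightarrow> nat" where
  "delta0 m i = (if i = 0 then 1 mod m else 0)"

lemma rot_eq: "rot d i = (if i + 1 = d then 0 else if i < d then i + 1 else i)"
  by (simp add: rot_def)

lemma rot_permutes: "rot d permutes {0..<d}"
  by (rule inj_imp_permutes) (auto simp: inj_on_def rot_eq split: if_splits)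

lemma funpow_rot: "i < d \<Longrightarrow> (rot d ^^ n) i = (i + n) mod d"
proof (induction n)
  case (Suc n)
  have "(i + n) mod d < d" using Suc.prems by simp
  then show ?case using Suc by (simp add: rot_def mod_Suc_eq)
qed simp

lemma Lrep_eq: "Lrep d m a = welem d m (rot d) a (delta0 m)"
  unfolding Lrep_def delta0_def by (rule welem_cong) (simp_all add: rot_def)

lemma Lrep_in_Weq: "is_unit_mod m a \<Longrightarrow> Lrep d m a \<in> Weq d m"
  unfolding Lrep_eq by (rule WeqI[OF rot_permutes]) (auto simp: delta0_def is_unit_mod_def)

lemma welem_shift_rot: "n < d \<Longrightarrow> welem_shift (rot d) a (delta0 m) n 0 = 0"
  by (induction n) (simp_all add: funpow_rot delta0_def del: funpow.simps)

lemma welem_shift_rot_period: "d > 0 \<Longrightarrow> welem_shift (rot d) a (delta0 m) d 0 = 1 mod m"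
  using welem_shift_rot[of "d - 1" d a m] funpow_rot[of 0 d d]
  by (cases d) (simp_all add: delta0_def)

lemma permutes_cycle_orbit:
  fixes \<sigma> :: "nat \<Rightarrow> nat"
  assumes s: "\<sigma> permutes {0..<d}" and d: "d > 0" and cov: "\<And>j. j < d \<Longrightarrow> \<exists>n. (\<sigma> ^^ n) 0 = j"
  shows "(\<sigma> ^^ d) 0 = 0" and "\<And>n. (\<sigma> ^^ n) 0 = 0 \<Longrightarrow> d dvd n"
    and "inj_on (\<lambda>j. (\<sigma> ^^ j) 0) {0..<d}"
proof -
  have p: "permutation \<sigma>" using s by (auto simp: permutation_permutes)
  \<comment> \<open>the cycle of \<open>\<sigma>\<close> through \<open>0\<close> is all of \<open>{0..<d}\<close>, so its length \<open>least_power \<sigma> 0\<close> is \<open>d\<close>\<close>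
  have "set (support \<sigma> 0) = {0..<d}"
    using support_set[OF p] funpow_permutes_lessThan_lt[OF s d] cov by fastforce
  then have "least_power \<sigma> 0 = d"
    using distinct_card[OF cycle_of_permutation[OF p, of 0]] by simp
  then show "(\<sigma> ^^ d) 0 = 0" and "\<And>n. (\<sigma> ^^ n) 0 = 0 \<Longrightarrow> d dvd n"
    and "inj_on (\<lambda>j. (\<sigma> ^^ j) 0) {0..<d}"
    using least_power_of_permutation(1)[OF p, of 0] least_power_dvd[OF p, of 0]
      cycle_of_permutation[OF p, of 0]
    by (simp_all add: distinct_map)
qed

lemma full_cycle_on_welem_cover:
  assumes s: "\<sigma> permutes {0..<d}" and m: "m > 0" and j: "j < d"
    and fc: "full_cycle_on (pts d m) (welem d m \<sigma> a bs)"
  obtains n where "(\<sigma> ^^ n) 0 = j"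
proof -
  have "(0, j) \<in> {(welem d m \<sigma> a bs ^^ n) (0, 0) |n. True}"
    using fc m j unfolding full_cycle_on_def by auto
  then show ?thesis
    using funpow_welem[OF s m] j that by fastforce
qed

lemma funpow_welem_period:
  assumes s: "\<sigma> permutes {0..<d}" and d: "d > 0" and period: "(\<sigma> ^^ d) 0 = 0" and x: "x < m"
  shows "(welem d m \<sigma> a bs ^^ (d * k)) (x, 0) = ((lam m (a ^ d) (welem_shift \<sigma> a bs d 0) ^^ k) x, 0)"
proof (induction k)
  case (Suc k)
  let ?g = "welem d m \<sigma> a bs" and ?y = "(lam m (a ^ d) (welem_shift \<sigma> a bs d 0) ^^ k) x"
  have "(?g ^^ (d * Suc k)) (x, 0) = (?g ^^ d) (?y, 0)"
    using Suc by (simp add: funpow_add mult_Suc_right)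
  also have "\<dots> = (lam m (a ^ d) (welem_shift \<sigma> a bs d 0) ?y, 0)"
    using funpow_welem[OF s funpow_lam_lt[OF x] d] period by (simp add: lam_def)
  finally show ?case by simp
qed simp

lemma full_cycle_on_welem_lam_transitive:
  assumes s: "\<sigma> permutes {0..<d}" and d: "d > 0" and cov: "\<And>j. j < d \<Longrightarrow> \<exists>n. (\<sigma> ^^ n) 0 = j"
    and fc: "full_cycle_on (pts d m) (welem d m \<sigma> a bs)"
  shows "lam_transitive m (a ^ d) (welem_shift \<sigma> a bs d 0)"
  unfolding lam_transitive_def
proof (intro allI impI)
  note orbit = permutes_cycle_orbit[OF s d cov]
  fix x z assume xz: "x < m" "z < m"
  then have "(z, 0) \<in> {(welem d m \<sigma> a bs ^^ n) (x, 0) |n. True}"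
    using fc d unfolding full_cycle_on_def by auto
  then obtain n where n: "(welem d m \<sigma> a bs ^^ n) (x, 0) = (z, 0)"
    by auto
  then have "(\<sigma> ^^ n) 0 = 0" using funpow_welem[OF s xz(1) d] by simp
  then obtain k where "n = d * k" using orbit(2) by blast
  then show "\<exists>k. (lam m (a ^ d) (welem_shift \<sigma> a bs d 0) ^^ k) x = z"
    using n funpow_welem_period[OF s d orbit(1) xz(1)] by auto
qed

lemma lam_transitive_full_cycle_on_welem:
  assumes s: "\<sigma> permutes {0..<d}" and d: "d > 0" and a: "is_unit_mod m a"
    and cov: "\<And>j. j < d \<Longrightarrow> \<exists>n. (\<sigma> ^^ n) 0 = j"
    and T: "lam_transitive m (a ^ d) (welem_shift \<sigma> a bs d 0)"
  shows "full_cycle_on (pts d m) (welem d m \<sigma> a bs)" (is "full_cycle_on _ ?g")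
  unfolding full_cycle_on_def
proof (intro ballI equalityI subsetI)
  note orbit = permutes_cycle_orbit[OF s d cov]
  note gpow = funpow_welem[OF s]
  fix p q assume p: "p \<in> pts d m" and q: "q \<in> pts d m"
  obtain x i y j where pq: "p = (x, i)" "q = (y, j)" and xy: "x < m" "y < m" and ij: "i < d" "j < d"
    using p q by (cases p, cases q) auto
  \<comment> \<open>walk from \<open>p\<close> into the fibre over \<open>0\<close>, around it with \<open>?g ^^ d\<close>, then out to \<open>q\<close>\<close>
  obtain s0 where s0: "(\<sigma> ^^ s0) 0 = i" "s0 < d"
    using cov[OF ij(1)] funpow_mod_eq[OF orbit(1)] d by (metis mod_less_divisor)
  define x' where "x' = fst ((?g ^^ (d - s0)) (x, i))"
  have "(\<sigma> ^^ (d - s0)) i = 0"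
    using s0 orbit(1) by (metis funpow_add o_apply le_add_diff_inverse2 less_imp_le_nat)
  then have to0: "(?g ^^ (d - s0)) (x, i) = (x', 0)"
    using gpow[OF xy(1) ij(1)] by (simp add: x'_def)
  have "(?g ^^ (d - s0)) (x, i) \<in> pts d m"
    by (rule funpow_welem_in_pts[OF s]) (use xy ij in simp)
  then have x': "x' < m" using to0 by simp
  obtain u where u: "(\<sigma> ^^ u) 0 = j" using cov[OF ij(2)] by blast
  have "coprime (a ^ u) m" using a by (simp add: is_unit_mod_def)
  then obtain z where z: "z < m" "lam m (a ^ u) (welem_shift \<sigma> a bs u 0) z = y"
    using lam_surj xy(2) by blast
  have from0: "(?g ^^ u) (z, 0) = (y, j)"
    using gpow[OF z(1) d] u z(2) by (simp add: lam_def)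
  obtain k where k: "(lam m (a ^ d) (welem_shift \<sigma> a bs d 0) ^^ k) x' = z"
    using T x' z(1) unfolding lam_transitive_def by blast
  have "(?g ^^ (u + (d * k + (d - s0)))) p = q"
    by (simp only: pq funpow_add o_apply to0 funpow_welem_period[OF s d orbit(1) x'] k from0)
  then show "q \<in> {(?g ^^ n) p |n. True}" by blast
next
  fix p q assume "p \<in> pts d m" "q \<in> {(?g ^^ n) p |n. True}"
  then show "q \<in> pts d m"
    by (auto intro: funpow_welem_in_pts[OF s])
qed

lemma Lrep_full_cycle:
  assumes d: "d > 0" and a: "is_unit_mod m a" and ad: "[a ^ d = 1] (mod rad' m)"
  shows "full_cycle_on (pts d m) (Lrep d m a)"
proof -
  have m: "m > 0" using a by (rule is_unit_mod_pos)
  have "coprime (1 mod m) m" by (cases "m = 1") simp_all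
  then have "lam_transitive m (a ^ d) (welem_shift (rot d) a (delta0 m) d 0)"
    using hull_dobell[OF m] ad welem_shift_rot_period[OF d] by simp
  moreover have "\<exists>n. (rot d ^^ n) 0 = j" if "j < d" for j
    using funpow_rot[OF d, of j] that by auto
  ultimately show ?thesis
    unfolding Lrep_eq by (rule lam_transitive_full_cycle_on_welem[OF rot_permutes d a, rotated])
qed

lemma Lrep_conj_eq:
  assumes "d > 0" and "is_unit_mod m a" and "is_unit_mod m a'"
    and "conj_in (Weq d m) (Lrep d m a) (Lrep d m a')"
  shows "a = a'"
  using conj_in_Weq_multiplier[OF assms(1) rot_permutes assms(2,3)] assms(4) by (simp add: Lrep_eq)

lemma welem_intertwine_rot:
  assumes s: "\<sigma> permutes {0..<d}" and d: "d > 0" and period: "(\<sigma> ^^ d) 0 = 0"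
    and t: "\<tau> permutes {0..<d}" and \<tau>: "\<And>j. j < d \<Longrightarrow> \<tau> j = (\<sigma> ^^ j) 0"
    and es: "\<And>j. j < d \<Longrightarrow> es (\<tau> j) = welem_shift \<sigma> a bs j 0 mod m"
  defines "c \<equiv> welem_shift \<sigma> a bs d 0 mod m"
  shows "welem d m \<sigma> a bs \<circ> welem d m \<tau> c es = welem d m \<tau> c es \<circ> welem d m (rot d) a (delta0 m)"
proof (rule welem_intertwineI[OF rot_permutes t])
  fix j assume j: "j < d"
  have \<sigma>\<tau>: "\<sigma> (\<tau> j) = (\<sigma> ^^ Suc j) 0" using \<tau>[OF j] by simp
  show "\<sigma> (\<tau> j) = \<tau> (rot d j)"
    using \<sigma>\<tau> \<tau> j d period by (auto simp: rot_eq)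
  have shift_j: "[a * welem_shift \<sigma> a bs j 0 + b = a * es (\<tau> j) + b] (mod m)" for b
    using es[OF j] by (simp add: cong_def mod_affine_eq)
  show "[c * delta0 m (rot d j) + es (\<tau> (rot d j)) = a * es (\<tau> j) + bs (\<sigma> (\<tau> j))] (mod m)"
  proof (cases "j + 1 = d")
    case True
    have "c * delta0 m (rot d j) + es (\<tau> (rot d j)) = c * (1 mod m)"
      using True es[OF d] \<tau>[OF d] by (simp add: rot_eq delta0_def)
    also have "[c * (1 mod m) = welem_shift \<sigma> a bs d 0] (mod m)"
      unfolding c_def cong_def by (simp add: mod_mult_eq)
    also have "welem_shift \<sigma> a bs d 0 = a * welem_shift \<sigma> a bs j 0 + bs (\<sigma> (\<tau> j))"
      using True \<sigma>\<tau> by (metis Suc_eq_plus1 welem_shift.simps(2))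
    also note shift_j
    finally show ?thesis .
  next
    case False
    then have r: "rot d j = Suc j" and sj: "Suc j < d" using j by (simp_all add: rot_eq)
    have "c * delta0 m (rot d j) + es (\<tau> (rot d j)) = welem_shift \<sigma> a bs (Suc j) 0 mod m"
      using es[OF sj] by (simp add: r delta0_def)
    also have "[\<dots> = a * welem_shift \<sigma> a bs j 0 + bs (\<sigma> (\<tau> j))] (mod m)"
      using \<sigma>\<tau> by (simp add: cong_def)
    also note shift_j
    finally show ?thesis .
  qed
qed

lemma full_cycle_conj_Lrep:
  assumes d: "d > 0" and g: "g \<in> Weq d m" and fc: "full_cycle_on (pts d m) g"
  obtains a where "is_unit_mod m a" "[a ^ d = 1] (mod rad' m)" "conj_in (Weq d m) g (Lrep d m a)"
proof -
  obtain \<sigma> a bs where s: "\<sigma> permutes {0..<d}" and a: "is_unit_mod m a" and g_eq: "g = welem d m \<sigma> a bs"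
    using WeqE[OF g] by blast
  have m: "m > 0" using a by (rule is_unit_mod_pos)
  have cov: "\<exists>n. (\<sigma> ^^ n) 0 = j" if "j < d" for j
    using full_cycle_on_welem_cover[OF s m that] fc g_eq by metis
  note orbit = permutes_cycle_orbit[OF s d cov]
  let ?C = "welem_shift \<sigma> a bs d 0"
  have "lam_transitive m (a ^ d) ?C"
    using full_cycle_on_welem_lam_transitive[OF s d cov] fc g_eq by blast
  then have "coprime ?C m" and ad: "[a ^ d = 1] (mod rad' m)"
    using hull_dobell[OF m] by auto
  then have c: "is_unit_mod m (?C mod m)" using m by (simp add: is_unit_mod_def)
  \<comment> \<open>relabel the fibres along the cycle of \<open>\<sigma>\<close> through \<open>0\<close>\<close>
  define \<tau> where "\<tau> = (\<lambda>j. if j < d then (\<sigma> ^^ j) 0 else j)"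
  have t: "\<tau> permutes {0..<d}"
    using orbit(3) funpow_permutes_lessThan_lt[OF s d]
    by (intro inj_imp_permutes) (auto simp: \<tau>_def inj_on_def)
  define es where "es = (\<lambda>i. welem_shift \<sigma> a bs (inv \<tau> i) 0 mod m)"
  have "welem d m \<tau> (?C mod m) es \<in> Weq d m"
    using m by (intro WeqI[OF t c]) (simp add: es_def)
  moreover have "g \<circ> welem d m \<tau> (?C mod m) es = welem d m \<tau> (?C mod m) es \<circ> Lrep d m a"
    unfolding g_eq Lrep_eq
    by (rule welem_intertwine_rot[OF s d orbit(1) t])
      (simp_all add: es_def permutes_inverses(2)[OF t], simp add: \<tau>_def)
  ultimately have "conj_in (Weq d m) (Lrep d m a) g"
    unfolding conj_in_def by blast
  then show ?thesis
    using that a ad conj_in_Weq_sym by blast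
qed

section \<open>Conjugacy classes of involutions\<close>

lemma pairswap_lt: "i < 2 * k \<Longrightarrow> pairswap k i < 2 * k"
  by (auto simp: pairswap_def)

lemma pairswap_pairswap [simp]: "pairswap k (pairswap k i) = i"
  by (auto simp: pairswap_def)

lemma pairswap_eq_self_iff: "pairswap k i = i \<longleftrightarrow> 2 * k \<le> i"
  by (auto simp: pairswap_def) presburger+

lemma pairswap_permutes:
  assumes "2 * k \<le> d"
  shows "pairswap k permutes {0..<d}"
proof (rule inj_imp_permutes)
  show "inj_on (pairswap k) {0..<d}" by (metis inj_onI pairswap_pairswap)
  fix i assume "i \<in> {0..<d}"
  then show "pairswap k i \<in> {0..<d}"
    using pairswap_lt[of i k] assms by (cases "i < 2 * k") (auto simp: pairswap_def)
qed (use assms in \<open>auto simp: pairswap_def\<close>)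

definition Irep_shift :: "nat \<Rightarrow> (nat \<times> nat) list \<Rightarrow> nat \<Rightarrow> nat" where
  "Irep_shift k t i = (if i < 2 * k then 0 else snd (t ! (i - 2 * k)))"

lemma Irep_eq: "Irep d m k a t = welem d m (pairswap k) a (Irep_shift k t)"
  by (simp only: Irep_def Irep_shift_def[abs_def])

lemma lex_le_eq: "lex_le = (\<le>)"
  by (auto simp: lex_le_def less_eq_prod_def fun_eq_iff)

lemma IidxD:
  assumes "(k, a, t) \<in> Iidx d m R"
  shows "2 * k \<le> d" "is_unit_mod m a" "[a ^ 2 = 1] (mod m)" "length t = d - 2 * k"
    "set t \<subseteq> R" "\<And>h. h \<in> set t \<Longrightarrow> fst h = a" "sorted t"
  using assms by (auto simp: Iidx_def lex_le_eq)

lemma Irep_in_Weq: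
  assumes R_inv: "\<forall>h\<in>R. hol_involution m h" and kat: "(k, a, t) \<in> Iidx d m R"
  shows "Irep d m k a t \<in> Weq d m"
  unfolding Irep_eq
proof (rule WeqI[OF pairswap_permutes IidxD(2)[OF kat]])
  show "2 * k \<le> d" by (rule IidxD(1)[OF kat])
  fix i assume i: "i < d"
  show "Irep_shift k t i < m"
  proof (cases "i < 2 * k")
    case False
    then have "t ! (i - 2 * k) \<in> set t"
      using i IidxD(4)[OF kat] by simp
    then have "hol_involution m (t ! (i - 2 * k))"
      using IidxD(5)[OF kat] R_inv by blast
    then show ?thesis
      using False by (simp add: Irep_shift_def hol_involution_def hol_def mem_Times_iff)
  qed (use is_unit_mod_pos[OF IidxD(2)[OF kat]] in \<open>simp add: Irep_shift_def\<close>)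
qed

lemma Irep_involution:
  assumes R_inv: "\<forall>h\<in>R. hol_involution m h" and kat: "(k, a, t) \<in> Iidx d m R"
  shows "involution (Irep d m k a t)"
  unfolding involution_def
proof
  fix p
  have ps: "pairswap k permutes {0..<d}" using pairswap_permutes[OF IidxD(1)[OF kat]] .
  show "(Irep d m k a t \<circ> Irep d m k a t) p = id p"
  proof (cases "p \<in> pts d m")
    case True
    then obtain x i where p: "p = (x, i)" "x < m" "i < d" by (cases p) auto
    have "(a * a * x + (a * Irep_shift k t (pairswap k i) + Irep_shift k t i)) mod m = x"
    proof (cases "i < 2 * k")
      case True
      then have "(a * a * x + (a * Irep_shift k t (pairswap k i) + Irep_shift k t i)) mod m = (a ^ 2 * x) mod m"
        by (simp add: Irep_shift_def pairswap_lt power2_eq_square)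
      also have "\<dots> = x"
        using cong_mult[OF IidxD(3)[OF kat] cong_refl[of x]] p(2) by (simp add: cong_def)
      finally show ?thesis .
    next
      case False
      define h where "h = t ! (i - 2 * k)"
      have "h \<in> set t" using False p(3) IidxD(4)[OF kat] by (simp add: h_def)
      then have "hol_involution m h" "fst h = a" using IidxD(5,6)[OF kat] R_inv by auto
      then have "lam m a (snd h) (lam m a (snd h) x) = x" using p(2) by (simp add: hol_involution_def)
      moreover have "pairswap k i = i" using False by (simp add: pairswap_eq_self_iff)
      ultimately show ?thesis
        using False by (simp add: Irep_shift_def lam_comp h_def)
    qed
    then show ?thesis
      using welem_comp_apply[OF ps p(2,3)] by (simp add: Irep_eq p(1))
  qed (simp add: Irep_eq welem_outside)
qed

lemma hol_conj_refl: "m > 0 \<Longrightarrow> hol_conj m h h"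
  unfolding hol_conj_def using is_unit_mod_one[of m]
  by (intro bexI[of _ "(1 mod m, 0)"]) (auto simp: hol_def lam_def mod_mult_left_eq)

lemma rep_eqI:
  assumes m: "m > 0" and R_inv: "\<forall>h\<in>R. hol_involution m h"
    and R_rep: "\<forall>h. hol_involution m h \<longrightarrow> (\<exists>!r. r \<in> R \<and> hol_conj m r h)"
    and r: "r \<in> R" and r': "r' \<in> R" and c: "hol_conj m r r'"
  shows "r = r'"
  using R_rep R_inv r r' c hol_conj_refl[OF m] by metis

lemma permutes_conj_pairswap_eq:
  assumes t: "\<tau> permutes {0..<d}" and k: "2 * k \<le> d" and k': "2 * k' \<le> d"
    and conj: "\<And>j. j < d \<Longrightarrow> pairswap k' (\<tau> j) = \<tau> (pairswap k j)"
  shows "k = k'"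
proof -
  have inj: "inj_on \<tau> {0..<d}" using permutes_inj_on[OF t] .
  \<comment> \<open>\<open>\<tau>\<close> maps the fixed points of \<open>pairswap k\<close> onto those of \<open>pairswap k'\<close>\<close>
  have fix_iff: "2 * k \<le> j \<longleftrightarrow> 2 * k' \<le> \<tau> j" if j: "j < d" for j
  proof -
    have "2 * k \<le> j \<longleftrightarrow> pairswap k j = j"
      by (simp add: pairswap_eq_self_iff)
    also have "\<dots> \<longleftrightarrow> \<tau> (pairswap k j) = \<tau> j"
      using inj j permutes_lessThan_lt[OF pairswap_permutes[OF k] j] by (auto simp: inj_on_def)
    also have "\<dots> \<longleftrightarrow> pairswap k' (\<tau> j) = \<tau> j"
      using conj[OF j] by simp
    finally show ?thesis
      by (simp add: pairswap_eq_self_iff)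
  qed
  have "\<tau> ` {0..<2 * k} \<subseteq> {0..<2 * k'}"
  proof (rule image_subsetI)
    fix j assume "j \<in> {0..<2 * k}"
    then show "\<tau> j \<in> {0..<2 * k'}" using fix_iff[of j] k by simp
  qed
  then have "card {0..<2 * k} \<le> card {0..<2 * k'}"
    using inj k by (intro card_inj_on_le[of \<tau>]) (auto intro: inj_on_subset)
  moreover have "\<tau> ` {2 * k..<d} \<subseteq> {2 * k'..<d}"
  proof (rule image_subsetI)
    fix j assume "j \<in> {2 * k..<d}"
    then show "\<tau> j \<in> {2 * k'..<d}" using fix_iff[of j] permutes_lessThan_lt[OF t, of j] by simp
  qed
  then have "card {2 * k..<d} \<le> card {2 * k'..<d}"
    using inj by (intro card_inj_on_le[of \<tau>]) (auto intro: inj_on_subset)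
  ultimately show ?thesis using k k' by simp
qed

lemma sorted_permute_list_eq:
  assumes "sorted xs" "sorted ys" "\<pi> permutes {..<length ys}" "xs = permute_list \<pi> ys"
  shows "xs = ys"
  using assms properties_for_sort[of xs ys] properties_for_sort[OF refl, of ys] by simp

lemma hol_conjI:
  assumes c: "is_unit_mod m c" and e: "e < m" and a: "fst h = a" "fst h' = a"
    and cong: "\<And>x. x < m \<Longrightarrow> [a * c * x + (a * e + snd h') = c * a * x + (c * snd h + e)] (mod m)"
  shows "hol_conj m h h'"
  unfolding hol_conj_def
proof (rule bexI[of _ "(c, e)"])
  show "(c, e) \<in> hol m" using c e by (simp add: hol_def)
  have "lam m c e (lam m a (snd h) x) = lam m a (snd h') (lam m c e x)" if x: "x < m" for x
    using cong_sym[OF cong[OF x]] by (simp add: lam_comp cong_def)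
  then show "case (c, e) of (c, e) \<Rightarrow> \<forall>x<m. lam m c e (lam m (fst h) (snd h) x) = lam m (fst h') (snd h') (lam m c e x)"
    using a by simp
qed

lemma permutes_tail_shift:
  fixes \<tau> :: "nat \<Rightarrow> nat"
  assumes t: "\<tau> permutes {0..<d}" and tail: "\<And>j. c \<le> j \<Longrightarrow> j < d \<Longrightarrow> c \<le> \<tau> j"
  shows "(\<lambda>j. if j < d - c then \<tau> (j + c) - c else j) permutes {..<d - c}" (is "?\<pi> permutes _")
proof (rule inj_imp_permutes)
  show "inj_on ?\<pi> {..<d - c}"
  proof (rule inj_onI)
    fix x y assume x: "x \<in> {..<d - c}" and y: "y \<in> {..<d - c}" and "?\<pi> x = ?\<pi> y"
    then have "\<tau> (x + c) - c = \<tau> (y + c) - c" by simp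
    moreover have "c \<le> \<tau> (x + c)" "c \<le> \<tau> (y + c)"
      using tail x y by simp_all
    ultimately have "\<tau> (x + c) = \<tau> (y + c)" by linarith
    then have "x + c = y + c"
      by (rule injD[OF permutes_inj[OF t]])
    then show "x = y" by simp
  qed
  fix x assume x: "x \<in> {..<d - c}"
  then have "c \<le> \<tau> (x + c)" "\<tau> (x + c) < d"
    using tail[of "x + c"] permutes_lessThan_lt[OF t, of "x + c"] by simp_all
  then show "?\<pi> x \<in> {..<d - c}"
    using x by simp
qed simp_all

lemma Irep_conj_eq:
  assumes d: "d > 0" and R_inv: "\<forall>h\<in>R. hol_involution m h"
    and R_rep: "\<forall>h. hol_involution m h \<longrightarrow> (\<exists>!r. r \<in> R \<and> hol_conj m r h)"
    and kat: "(k, a, t) \<in> Iidx d m R" and kat': "(k', a', t') \<in> Iidx d m R"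
    and conj: "conj_in (Weq d m) (Irep d m k a t) (Irep d m k' a' t')"
  shows "(k, a, t) = (k', a', t')"
proof -
  have m: "m > 0" using is_unit_mod_pos[OF IidxD(2)[OF kat]] .
  note ps = pairswap_permutes[OF IidxD(1)[OF kat]] and ps' = pairswap_permutes[OF IidxD(1)[OF kat']]
  have aa: "a = a'"
    using conj_in_Weq_multiplier[OF d ps IidxD(2)[OF kat] IidxD(2)[OF kat']] conj by (simp add: Irep_eq)
  obtain w where w: "w \<in> Weq d m" and eq: "Irep d m k' a' t' \<circ> w = w \<circ> Irep d m k a t"
    using conj unfolding conj_in_def by blast
  obtain \<tau> c es where t: "\<tau> permutes {0..<d}" and c: "is_unit_mod m c"
    and es: "\<And>i. i < d \<Longrightarrow> es i < m" and w_eq: "w = welem d m \<tau> c es"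
    using WeqE[OF w] by blast
  note D = welem_intertwineD[OF eq[unfolded Irep_eq w_eq] ps t]
  have swap: "pairswap k' (\<tau> j) = \<tau> (pairswap k j)" if "j < d" for j
    using D(1)[OF m that] .
  have kk: "k = k'"
    using permutes_conj_pairswap_eq[OF t IidxD(1)[OF kat] IidxD(1)[OF kat'] swap] .
  define n where "n = d - 2 * k"
  have len: "length t = n" "length t' = n" using IidxD(4)[OF kat] IidxD(4)[OF kat'] kk by (simp_all add: n_def)
  have \<tau>_fix: "2 * k \<le> \<tau> j \<and> \<tau> j < d" if "2 * k \<le> j" "j < d" for j
  proof -
    have "pairswap k j = j" using that by (simp add: pairswap_eq_self_iff)
    then have "pairswap k' (\<tau> j) = \<tau> j" using swap[OF that(2)] by simp
    then show ?thesis
      using kk permutes_lessThan_lt[OF t that(2)] by (simp add: pairswap_eq_self_iff)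
  qed
  \<comment> \<open>\<open>\<tau>\<close> permutes the fixed fibres; as \<open>\<pi>\<close> it permutes the entries of the tuples\<close>
  define \<pi> where "\<pi> = (\<lambda>j. if j < n then \<tau> (j + 2 * k) - 2 * k else j)"
  have \<pi>: "\<pi> permutes {..<n}"
    unfolding \<pi>_def n_def by (rule permutes_tail_shift[OF t]) (use \<tau>_fix in blast)
  have "t ! j = t' ! (\<pi> j)" if j: "j < n" for j
  proof (rule rep_eqI[OF m R_inv R_rep])
    let ?i = "j + 2 * k"
    have i: "?i < d" "pairswap k ?i = ?i" "pairswap k' (\<tau> ?i) = \<tau> ?i" "\<tau> ?i - 2 * k' = \<pi> j"
      using j \<tau>_fix[of ?i] kk by (auto simp: n_def \<pi>_def pairswap_eq_self_iff)
    have "\<pi> j < n" using permutes_in_image[OF \<pi>] j by simp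
    then show "t ! j \<in> R" "t' ! (\<pi> j) \<in> R"
      using j len IidxD(5)[OF kat] IidxD(5)[OF kat'] by auto
    show "hol_conj m (t ! j) (t' ! (\<pi> j))"
    proof (rule hol_conjI[OF c es[OF permutes_lessThan_lt[OF t i(1)]]])
      show "fst (t ! j) = a" "fst (t' ! (\<pi> j)) = a"
        using IidxD(6)[OF kat] IidxD(6)[OF kat'] j len \<open>\<pi> j < n\<close> aa by auto
      show "[a * c * x + (a * es (\<tau> ?i) + snd (t' ! (\<pi> j))) = c * a * x + (c * snd (t ! j) + es (\<tau> ?i))] (mod m)"
        if "x < m" for x
        using D(2)[OF that i(1)] i \<tau>_fix[of ?i] kk aa by (simp add: Irep_shift_def)
    qed
  qed
  then have "t = permute_list \<pi> t'"
    using len \<pi> by (intro nth_equalityI) (simp_all add: permute_list_nth)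
  then have "t = t'"
    using sorted_permute_list_eq IidxD(7)[OF kat] IidxD(7)[OF kat'] \<pi> len by metis
  then show ?thesis using kk aa by simp
qed

lemma hol_conj_fst:
  assumes r: "r \<in> hol m" and a: "is_unit_mod m a" and conj: "hol_conj m r (a, b)"
  shows "fst r = a"
proof (cases "m = 1")
  case False
  then have m: "m > 1" using is_unit_mod_pos[OF a] by simp
  obtain c e where c: "is_unit_mod m c"
    and H: "\<And>x. x < m \<Longrightarrow> lam m c e (lam m (fst r) (snd r) x) = lam m a b (lam m c e x)"
    using conj unfolding hol_conj_def hol_def by auto
  have K: "[c * fst r * x + (c * snd r + e) = a * c * x + (a * e + b)] (mod m)" if "x < m" for x
    using H[OF that] by (simp add: lam_comp cong_def)
  have "[c * fst r = a * c] (mod m)"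
    using m K by (rule cong_linear_coeff)
  then have "[c * fst r = c * a] (mod m)"
    by (simp add: mult.commute)
  then have "[fst r = a] (mod m)"
    using c by (simp add: cong_mult_lcancel_nat is_unit_mod_def)
  then show ?thesis
    using r a by (cases r) (simp add: cong_def hol_def is_unit_mod_def)
qed (use r a in \<open>auto simp: hol_def is_unit_mod_def\<close>)

lemma unit_mod_odd_representative:
  assumes c: "is_unit_mod m c"
  obtains q where "[c = 2 * q + 1] (mod m)"
proof (cases "odd c")
  case True
  then obtain q where "c = 2 * q + 1" by (blast elim: oddE)
  then show ?thesis using that[of q] by simp
next
  case False
  then have "odd m"
    using c by (auto simp: is_unit_mod_def dest: coprime_common_divisor[of c m 2])
  with False have "odd (c + m)" by simp
  then obtain q where q: "c + m = 2 * q + 1" by (blast elim: oddE)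
  have "[c = c + m] (mod m)" by (simp add: cong_def)
  then show ?thesis using that[of q] q by simp
qed

lemma hol_conj_translation:
  assumes r: "hol_involution m r" and a: "is_unit_mod m a" and conj: "hol_conj m r (a, b)"
  obtains e where "e < m" "[snd r + e = a * e + b] (mod m)"
proof -
  have m: "m > 0" using a by (rule is_unit_mod_pos)
  have r_hol: "r \<in> hol m" and rb: "snd r < m"
    using r by (auto simp: hol_involution_def hol_def)
  have ra: "fst r = a" by (rule hol_conj_fst[OF r_hol a conj])
  obtain c e' where c: "is_unit_mod m c" and e': "e' < m"
    and H: "\<And>x. x < m \<Longrightarrow> lam m c e' (lam m (fst r) (snd r) x) = lam m a b (lam m c e' x)"
    using conj unfolding hol_conj_def hol_def by auto
  let ?b = "snd r"
  have H0: "[c * ?b + e' = a * e' + b] (mod m)"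
    using H[OF m] e' by (simp add: lam_comp cong_def)
  have rinv: "[a * ?b + ?b = 0] (mod m)"
    using r m ra by (auto simp: hol_involution_def lam_comp cong_def)
  \<comment> \<open>replace \<open>c\<close> by an odd representative \<open>2 q + 1\<close>; since \<open>a b + b \<equiv> 0\<close>, the
     conjugation by \<open>x \<mapsto> c x\<close> then acts on \<open>x \<mapsto> a x + b\<close> like the translation by \<open>q b\<close>\<close>
  obtain q where q: "[c = 2 * q + 1] (mod m)"
    using unit_mod_odd_representative[OF c] by blast
  define h where "h = q * ?b"
  have key: "[c * ?b + a * h = ?b + h] (mod m)"
  proof -
    have "[c * ?b + a * h = (2 * q + 1) * ?b + a * h] (mod m)"
      by (intro cong_add cong_mult q cong_refl)
    also have "(2 * q + 1) * ?b + a * h = (?b + h) + q * (a * ?b + ?b)"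
      by (simp add: h_def algebra_simps)
    also have "[(?b + h) + q * (a * ?b + ?b) = (?b + h) + q * 0] (mod m)"
      by (intro cong_add cong_mult cong_refl rinv)
    finally show ?thesis by simp
  qed
  have "[a * ((e' + h) mod m) + b = (a * e' + b) + a * h] (mod m)"
    unfolding cong_def mod_affine_eq by (simp add: algebra_simps)
  also have "[(a * e' + b) + a * h = e' + (c * ?b + a * h)] (mod m)"
    using cong_add[OF cong_sym[OF H0] cong_refl[of "a * h"]] by (simp add: ac_simps)
  also have "[e' + (c * ?b + a * h) = ?b + (e' + h)] (mod m)"
    using cong_add[OF cong_refl[of e'] key] by (simp add: ac_simps)
  also have "[?b + (e' + h) = ?b + (e' + h) mod m] (mod m)"
    by (simp add: cong_def mod_add_right_eq)
  finally show ?thesis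
    using that[of "(e' + h) mod m"] m by (simp add: cong_sym_eq)
qed

lemma welem_involutionD:
  assumes s: "\<sigma> permutes {0..<d}" and inv: "involution (welem d m \<sigma> a bs)" and x: "x < m" and i: "i < d"
  shows "\<sigma> (\<sigma> i) = i" and "(a * a * x + (a * bs (\<sigma> i) + bs i)) mod m = x"
proof -
  have "((a * a * x + (a * bs (\<sigma> i) + bs (\<sigma> (\<sigma> i)))) mod m, \<sigma> (\<sigma> i))
      = (welem d m \<sigma> a bs \<circ> welem d m \<sigma> a bs) (x, i)"
    by (rule welem_comp_apply[OF s x i, symmetric])
  also have "\<dots> = (x, i)"
    using inv by (simp add: involution_def)
  finally have "((a * a * x + (a * bs (\<sigma> i) + bs (\<sigma> (\<sigma> i)))) mod m, \<sigma> (\<sigma> i)) = (x, i)" .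
  then have "\<sigma> (\<sigma> i) = i" and "(a * a * x + (a * bs (\<sigma> i) + bs (\<sigma> (\<sigma> i)))) mod m = x"
    unfolding prod.inject by blast+
  then show "\<sigma> (\<sigma> i) = i" and "(a * a * x + (a * bs (\<sigma> i) + bs i)) mod m = x"
    by simp_all
qed

lemma welem_involution_multiplier:
  assumes s: "\<sigma> permutes {0..<d}" and inv: "involution (welem d m \<sigma> a bs)"
    and d: "d > 0" and m: "m > 0"
  shows "[a ^ 2 = 1] (mod m)"
proof (cases "m = 1")
  case False
  then have "m > 1" using m by simp
  have K: "[a * a * x + (a * bs (\<sigma> 0) + bs 0) = 1 * x + 0] (mod m)" if "x < m" for x
    using welem_involutionD(2)[OF s inv that d] that by (simp add: cong_def)
  have "[a * a = 1] (mod m)"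
    using \<open>m > 1\<close> K by (rule cong_linear_coeff)
  then show ?thesis
    by (simp add: power2_eq_square)
qed (simp add: cong_def)

lemma welem_involution_fixed_fibre:
  assumes s: "\<sigma> permutes {0..<d}" and inv: "involution (welem d m \<sigma> a bs)"
    and a: "is_unit_mod m a" and i: "i < d" "\<sigma> i = i" and b: "bs i < m"
  shows "hol_involution m (a, bs i)"
proof -
  have "lam m a (bs i) (lam m a (bs i) x) = x" if "x < m" for x
    using welem_involutionD(2)[OF s inv that i(1)] i(2) by (simp add: lam_comp)
  then show ?thesis
    using a b by (simp add: hol_involution_def hol_def)
qed

lemma representative_of_hol_involution:
  assumes R_inv: "\<forall>h\<in>R. hol_involution m h"
    and R_rep: "\<forall>h. hol_involution m h \<longrightarrow> (\<exists>!r. r \<in> R \<and> hol_conj m r h)"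
    and a: "is_unit_mod m a" and h: "hol_involution m (a, b)"
  defines "r \<equiv> THE r. r \<in> R \<and> hol_conj m r (a, b)"
  shows "r \<in> R" and "fst r = a" and "\<exists>e<m. [snd r + e = a * e + b] (mod m)"
proof -
  have "\<exists>!r. r \<in> R \<and> hol_conj m r (a, b)"
    using R_rep h by blast
  then have r: "r \<in> R" "hol_conj m r (a, b)"
    unfolding r_def by (rule theI'[THEN conjunct1], rule theI'[THEN conjunct2])
  then have r_inv: "hol_involution m r" using R_inv by blast
  show "r \<in> R" by (rule r(1))
  show "fst r = a"
    using r_inv hol_conj_fst[OF _ a r(2)] by (simp add: hol_involution_def)
  obtain e where "e < m" "[snd r + e = a * e + b] (mod m)"
    using hol_conj_translation[OF r_inv a r(2)] .
  then show "\<exists>e<m. [snd r + e = a * e + b] (mod m)" by blast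
qed

lemma permutes_of_image_eq:
  assumes "finite S" and "f ` S = S" and "\<And>x. x \<notin> S \<Longrightarrow> f x = x"
  shows "f permutes S"
  using assms by (intro inj_imp_permutes eq_card_imp_inj_on) auto

lemma involution_partition:
  fixes \<sigma> :: "nat \<Rightarrow> nat"
  assumes s: "\<sigma> permutes {0..<d}" and inv: "\<And>i. i < d \<Longrightarrow> \<sigma> (\<sigma> i) = i"
  defines "P \<equiv> {i. i < d \<and> i < \<sigma> i}" and "F \<equiv> {i. i < d \<and> \<sigma> i = i}"
  shows "{0..<d} = P \<union> \<sigma> ` P \<union> F" and "2 * card P + card F = d"
proof -
  have \<sigma>_lt: "\<sigma> i < d" if "i < d" for i using permutes_lessThan_lt[OF s that] .
  have moved: "i < \<sigma> i" "\<sigma> (\<sigma> i) = i" if "i \<in> P" for i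
    using that inv by (simp_all add: P_def)
  show part: "{0..<d} = P \<union> \<sigma> ` P \<union> F"
  proof (intro equalityI subsetI)
    fix i assume "i \<in> {0..<d}"
    then have i: "i < d" by simp
    consider "i < \<sigma> i" | "\<sigma> i < i" | "\<sigma> i = i" by linarith
    then show "i \<in> P \<union> \<sigma> ` P \<union> F"
    proof cases
      case 2
      then have "\<sigma> i \<in> P" using inv[OF i] \<sigma>_lt[OF i] by (simp add: P_def)
      then have "\<sigma> (\<sigma> i) \<in> \<sigma> ` P" by (rule imageI)
      then show ?thesis using inv[OF i] by simp
    qed (use i in \<open>simp_all add: P_def F_def\<close>)
  qed (use \<sigma>_lt in \<open>auto simp: P_def F_def\<close>)
  have disj1: "P \<inter> \<sigma> ` P = {}"
  proof (rule equals0I)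
    fix x assume "x \<in> P \<inter> \<sigma> ` P"
    then obtain y where "y \<in> P" "x = \<sigma> y" "x \<in> P" by blast
    then show False using moved[of y] moved[of x] by simp
  qed
  have disj2: "(P \<union> \<sigma> ` P) \<inter> F = {}"
  proof (rule equals0I)
    fix x assume x: "x \<in> (P \<union> \<sigma> ` P) \<inter> F"
    then have fx: "\<sigma> x = x" by (simp add: F_def)
    show False
    proof (cases "x \<in> P")
      case True
      then show False using moved(1)[OF True] fx by simp
    next
      case False
      then obtain y where "y \<in> P" "x = \<sigma> y" using x by auto
      then show False using moved[of y] fx by auto
    qed
  qed
  have fin: "finite P" "finite F"
    unfolding P_def F_def by (rule finite_subset[of _ "{..<d}"]; auto)+
  have "d = card (P \<union> \<sigma> ` P \<union> F)"
    by (simp flip: part)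
  also have "\<dots> = card P + card (\<sigma> ` P) + card F"
    using fin disj1 disj2 by (simp add: card_Un_disjoint)
  also have "card (\<sigma> ` P) = card P"
    using card_image[OF permutes_inj_on[OF s]] .
  finally show "2 * card P + card F = d" by simp
qed

lemma involution_conj_pairswap:
  fixes \<sigma> :: "nat \<Rightarrow> nat"
  assumes s: "\<sigma> permutes {0..<d}" and inv: "\<And>i. i < d \<Longrightarrow> \<sigma> (\<sigma> i) = i"
    and fl: "distinct fl" "set fl = {i. i < d \<and> \<sigma> i = i}"
  obtains k \<tau> where "\<tau> permutes {0..<d}" "2 * k + length fl = d"
    "\<And>j. j < d \<Longrightarrow> \<sigma> (\<tau> j) = \<tau> (pairswap k j)"
    "\<And>j. j < 2 * k \<Longrightarrow> even j \<Longrightarrow> \<tau> j < \<sigma> (\<tau> j)"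
    "\<And>l. l < length fl \<Longrightarrow> \<tau> (2 * k + l) = fl ! l"
proof -
  define P where "P = {i. i < d \<and> i < \<sigma> i}"
  define pl where "pl = sorted_list_of_set P"
  define k where "k = length pl"
  note partition = involution_partition[OF s inv, folded P_def fl(2)]
  have pl: "distinct pl" "set pl = P" by (simp_all add: pl_def P_def)
  have dsum: "2 * k + length fl = d"
    using partition(2) distinct_card[OF pl(1)] distinct_card[OF fl(1)] pl(2) by (simp add: k_def)
  have pl_nth: "pl ! l < d" "pl ! l < \<sigma> (pl ! l)" if "l < k" for l
    using nth_mem[of l pl] that pl by (auto simp: k_def P_def)
  \<comment> \<open>list the pairs \<open>(p, \<sigma> p)\<close> with \<open>p < \<sigma> p\<close> first, then the fixed points in the order of \<open>fl\<close>\<close>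
  define \<tau> where "\<tau> j = (if j < 2 * k then (if even j then pl ! (j div 2) else \<sigma> (pl ! (j div 2)))
                       else if j < d then fl ! (j - 2 * k) else j)" for j
  have "\<tau> ` {0..<d} = {0..<d}"
  proof
    show "\<tau> ` {0..<d} \<subseteq> {0..<d}"
      using pl_nth permutes_lessThan_lt[OF s] nth_mem[of _ fl] fl(2) dsum by (auto simp: \<tau>_def)
    show "{0..<d} \<subseteq> \<tau> ` {0..<d}"
    proof
      fix i assume "i \<in> {0..<d}"
      then consider l where "l < k" "i = pl ! l" | l where "l < k" "i = \<sigma> (pl ! l)"
        | l where "l < length fl" "i = fl ! l"
        using partition(1) pl(2) by (auto simp: in_set_conv_nth k_def simp flip: fl(2))
      then show "i \<in> \<tau> ` {0..<d}"
      proof cases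
        case (1 l) then show ?thesis using dsum by (intro image_eqI[of _ _ "2 * l"]) (auto simp: \<tau>_def)
      next
        case (2 l) then show ?thesis using dsum by (intro image_eqI[of _ _ "2 * l + 1"]) (auto simp: \<tau>_def)
      next
        case (3 l) then show ?thesis using dsum by (intro image_eqI[of _ _ "2 * k + l"]) (auto simp: \<tau>_def)
      qed
    qed
  qed
  then have "\<tau> permutes {0..<d}"
    using dsum by (intro permutes_of_image_eq) (simp_all add: \<tau>_def)
  moreover have "\<sigma> (\<tau> j) = \<tau> (pairswap k j)" if j: "j < d" for j
  proof (cases "j < 2 * k")
    case True
    then have "pl ! (j div 2) < d" using pl_nth by simp
    then show ?thesis
      using True inv by (auto simp: \<tau>_def pairswap_def elim!: evenE oddE)
  next
    case False
    then have "fl ! (j - 2 * k) \<in> set fl" using j dsum by simp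
    then show ?thesis using False j fl(2) by (simp add: \<tau>_def pairswap_def)
  qed
  moreover have "\<tau> j < \<sigma> (\<tau> j)" if "j < 2 * k" "even j" for j
    using that pl_nth by (simp add: \<tau>_def)
  moreover have "\<tau> (2 * k + l) = fl ! l" if "l < length fl" for l
    using that dsum by (simp add: \<tau>_def)
  ultimately show ?thesis using that dsum by blast
qed

lemma welem_intertwine_pairswap:
  assumes s: "\<sigma> permutes {0..<d}" and t: "\<tau> permutes {0..<d}" and k: "2 * k \<le> d"
    and inv: "\<And>i. i < d \<Longrightarrow> \<sigma> (\<sigma> i) = i"
    and swap: "\<And>j. j < d \<Longrightarrow> \<sigma> (\<tau> j) = \<tau> (pairswap k j)"
    and orient: "\<And>j. j < 2 * k \<Longrightarrow> even j \<Longrightarrow> \<tau> j < \<sigma> (\<tau> j)"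
    and pair: "\<And>i. i < d \<Longrightarrow> [a * bs (\<sigma> i) + bs i = 0] (mod m)"
    and bs'_pair: "\<And>j. j < 2 * k \<Longrightarrow> bs' j = 0"
    and bs'_fixed: "\<And>j. 2 * k \<le> j \<Longrightarrow> j < d \<Longrightarrow> [bs' j + ef (\<tau> j) = a * ef (\<tau> j) + bs (\<tau> j)] (mod m)"
  defines "es \<equiv> \<lambda>i. if i < \<sigma> i then 0 else if \<sigma> i < i then bs i mod m else ef i"
  shows "welem d m \<sigma> a bs \<circ> welem d m \<tau> (1 mod m) es = welem d m \<tau> (1 mod m) es \<circ> welem d m (pairswap k) a bs'"
proof (rule welem_intertwineI[OF pairswap_permutes[OF k] t swap])
  fix j assume j: "j < d"
  note \<tau>_lt = permutes_lessThan_lt[OF t]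
  show "[1 mod m * bs' (pairswap k j) + es (\<tau> (pairswap k j)) = a * es (\<tau> j) + bs (\<sigma> (\<tau> j))] (mod m)"
  proof (cases "j < 2 * k")
    case True
    have bs': "bs' (pairswap k j) = 0" using bs'_pair pairswap_lt[OF True] by simp
    show ?thesis
    proof (cases "even j")
      case True
      let ?p = "\<tau> j"
      have "?p < \<sigma> ?p" "\<tau> (pairswap k j) = \<sigma> ?p" "\<sigma> (\<sigma> ?p) = ?p"
        using orient[OF \<open>j < 2 * k\<close> True] swap[OF j] inv[OF \<tau>_lt[OF j]] by simp_all
      then show ?thesis using bs' by (simp add: es_def cong_def)
    next
      case False
      let ?p = "\<tau> (pairswap k j)"
      have "even (pairswap k j)" "pairswap k j < 2 * k" "pairswap k j < d"
        using False j \<open>j < 2 * k\<close> pairswap_lt[OF \<open>j < 2 * k\<close>] by (auto simp: pairswap_def)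
      then have "?p < \<sigma> ?p" "\<sigma> ?p = \<tau> j" "\<sigma> (\<tau> j) = ?p"
        using orient[of "pairswap k j"] swap[of "pairswap k j"] swap[OF j] by simp_all
      then show ?thesis
        using bs' pair[OF \<tau>_lt[OF \<open>pairswap k j < d\<close>]]
        by (simp add: es_def cong_def mod_affine_eq)
    qed
  next
    case False
    then have "pairswap k j = j"
      by (simp add: pairswap_eq_self_iff)
    moreover from this have "\<sigma> (\<tau> j) = \<tau> j"
      using swap[OF j] by simp
    ultimately show ?thesis
      using bs'_fixed[of j] False j by (simp add: es_def cong_def mod_mult_left_eq)
  qed
qed

lemma involution_conj_Irep:
  assumes d: "d > 0" and R_inv: "\<forall>h\<in>R. hol_involution m h"
    and R_rep: "\<forall>h. hol_involution m h \<longrightarrow> (\<exists>!r. r \<in> R \<and> hol_conj m r h)"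
    and g: "g \<in> Weq d m" and inv: "involution g"
  obtains k a t where "(k, a, t) \<in> Iidx d m R" "conj_in (Weq d m) g (Irep d m k a t)"
proof -
  obtain \<sigma> a bs where s: "\<sigma> permutes {0..<d}" and a: "is_unit_mod m a"
    and bs: "\<And>i. i < d \<Longrightarrow> bs i < m" and g_eq: "g = welem d m \<sigma> a bs"
    using WeqE[OF g] by blast
  have m: "m > 0" using a by (rule is_unit_mod_pos)
  note D = welem_involutionD[OF s inv[unfolded g_eq] m]
  have \<sigma>\<sigma>: "\<sigma> (\<sigma> i) = i" if "i < d" for i using D(1)[OF that] .
  have pair: "[a * bs (\<sigma> i) + bs i = 0] (mod m)" if "i < d" for i
    using D(2)[OF that] by (simp add: cong_def)
  define Fs where "Fs = {i. i < d \<and> \<sigma> i = i}"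
  \<comment> \<open>over a fixed point of \<open>\<sigma>\<close> the fibre map is an involution of \<open>Hol(\<int>/m\<int>)\<close>; take its representative in \<open>R\<close>\<close>
  define rep where "rep i = (THE r. r \<in> R \<and> hol_conj m r (a, bs i))" for i
  have rep: "rep i \<in> R" "fst (rep i) = a" "\<exists>e<m. [snd (rep i) + e = a * e + bs i] (mod m)"
    if "i \<in> Fs" for i
    using representative_of_hol_involution[OF R_inv R_rep a
        welem_involution_fixed_fibre[OF s inv[unfolded g_eq] a _ _ bs]] that
    by (simp_all add: Fs_def rep_def)
  define ef where "ef i = (SOME e. e < m \<and> [snd (rep i) + e = a * e + bs i] (mod m))" for i
  have ef: "ef i < m \<and> [snd (rep i) + ef i = a * ef i + bs i] (mod m)" if "i \<in> Fs" for i
    unfolding ef_def by (rule someI_ex) (use rep(3)[OF that] in blast)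
  define fl where "fl = sort_key rep (sorted_list_of_set Fs)"
  have fl: "distinct fl" "set fl = Fs" by (simp_all add: fl_def Fs_def)
  obtain k \<tau> where t: "\<tau> permutes {0..<d}" and dsum: "2 * k + length fl = d"
    and swap: "\<And>j. j < d \<Longrightarrow> \<sigma> (\<tau> j) = \<tau> (pairswap k j)"
    and orient: "\<And>j. j < 2 * k \<Longrightarrow> even j \<Longrightarrow> \<tau> j < \<sigma> (\<tau> j)"
    and \<tau>_fl: "\<And>l. l < length fl \<Longrightarrow> \<tau> (2 * k + l) = fl ! l"
    using involution_conj_pairswap[OF s \<sigma>\<sigma> fl[unfolded Fs_def]] by blast
  define t where "t = map rep fl"
  define es where "es = (\<lambda>i. if i < \<sigma> i then 0 else if \<sigma> i < i then bs i mod m else ef i)"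
  have "welem d m \<tau> (1 mod m) es \<in> Weq d m"
  proof (rule WeqI[OF t is_unit_mod_one[OF m]])
    fix i assume "i < d"
    then show "es i < m" using m ef by (simp add: es_def Fs_def)
  qed
  moreover have "g \<circ> welem d m \<tau> (1 mod m) es = welem d m \<tau> (1 mod m) es \<circ> Irep d m k a t"
    unfolding g_eq Irep_eq es_def
  proof (rule welem_intertwine_pairswap[where a = a and bs = bs and m = m and ef = ef,
        OF s t _ \<sigma>\<sigma> swap orient pair])
    fix j assume j: "2 * k \<le> j" "j < d"
    then have "fl ! (j - 2 * k) = \<tau> j" "\<tau> j \<in> Fs"
      using \<tau>_fl[of "j - 2 * k"] dsum fl(2) nth_mem[of "j - 2 * k" fl] by simp_all
    then show "[Irep_shift k t j + ef (\<tau> j) = a * ef (\<tau> j) + bs (\<tau> j)] (mod m)"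
      using ef j dsum by (simp add: Irep_shift_def t_def)
  qed (use dsum in \<open>simp_all add: Irep_shift_def\<close>)
  ultimately have "conj_in (Weq d m) (Irep d m k a t) g"
    unfolding conj_in_def by blast
  moreover have "(k, a, t) \<in> Iidx d m R"
    using dsum rep fl a welem_involution_multiplier[OF s inv[unfolded g_eq] d m]
    by (auto simp: Iidx_def t_def lex_le_eq fl_def)
  ultimately show ?thesis using that conj_in_Weq_sym by blast
qed
theorem proposition6p24:
  fixes d m :: nat and R :: "(nat \<times> nat) set"
  assumes "d > 0" and "m > 0"
    and R_inv: "\<forall>h\<in>R. hol_involution m h"
    and R_rep: "\<forall>h. hol_involution m h \<longrightarrow> (\<exists>!r. r \<in> R \<and> hol_conj m r h)"
  shows
    "((\<forall>a. is_unit_mod m a \<and> [a ^ d = 1] (mod rad' m) \<longrightarrow>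
           Lrep d m a \<in> Weq d m \<and> full_cycle_on (pts d m) (Lrep d m a))
     \<and> (\<forall>a a'. is_unit_mod m a \<and> [a ^ d = 1] (mod rad' m) \<and>
               is_unit_mod m a' \<and> [a' ^ d = 1] (mod rad' m) \<and>
               conj_in (Weq d m) (Lrep d m a) (Lrep d m a') \<longrightarrow> a = a')
     \<and> (\<forall>g\<in>Weq d m. full_cycle_on (pts d m) g \<longrightarrow>
           (\<exists>a. is_unit_mod m a \<and> [a ^ d = 1] (mod rad' m) \<and> conj_in (Weq d m) g (Lrep d m a))))
     \<and> ((\<forall>(k, a, t)\<in>Iidx d m R. Irep d m k a t \<in> Weq d m \<and> involution (Irep d m k a t))
     \<and> (\<forall>(k, a, t)\<in>Iidx d m R. \<forall>(k', a', t')\<in>Iidx d m R.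
           conj_in (Weq d m) (Irep d m k a t) (Irep d m k' a' t') \<longrightarrow> (k, a, t) = (k', a', t'))
     \<and> (\<forall>g\<in>Weq d m. involution g \<longrightarrow>
           (\<exists>(k, a, t)\<in>Iidx d m R. conj_in (Weq d m) g (Irep d m k a t))))"
  apply (intro conjI)
  subgoal using Lrep_in_Weq Lrep_full_cycle[OF assms(1)] by blast
  subgoal using Lrep_conj_eq[OF assms(1)] by blast
  subgoal using full_cycle_conj_Lrep[OF assms(1)] by blast
  subgoal using Irep_in_Weq[OF R_inv] Irep_involution[OF R_inv] by blast
  subgoal using Irep_conj_eq[OF assms(1) R_inv R_rep] by blast
  subgoal using involution_conj_Irep[OF assms(1) R_inv R_rep] by blast
  done

end
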